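(* Suppose $d\ge 8$, $S\ge d+1$, $A\ge d-3$ and $K\ge 2(d-4)A$. Then for any learning algorithm $\mathrm{Alg}$ there exists an episodic infinite-horizon low-rank MDP $\mathcal M_{\mathrm{Alg}}$ of rank $d$ with $S$ states, $A$ actions and a fixed loss function (the same in every episode) such that the expected regret of $\mathrm{Alg}$ over $K$ episodes on $\mathcal M_{\mathrm{Alg}}$ is $\Omega\!\left(\frac{\gamma^2}{1-\gamma}\sqrt{dAK}\right)$.
   Context: An episodic infinite-horizon discounted MDP has state space $\mathcal S$ with $|\mathcal S|=S$, action space $\mathcal A$ with $|\mathcal A|=A$, transition kernel $P^\star$, discount factor $\gamma\in[0,1)$, initial distribution $d_0$, and losses $\ell_k:\mathcal S\times\mathcal A\to[0,1]$ (here $\ell_k=\ell$ for all $k$). It is a low-rank MDP of rank $d$ if there exist $\phi^\star:\mathcal S\times\mathcal A\to\mathbb R^d$ and $\mu^\star:\mathcal S\to\mathbb R^d$ with $P^\star(s'\mid s,a)=\mu^\star(s')^\top\phi^\star(s,a)$, $\|\phi^\star(s,a)\|_2\le 1$, and $\|\int\mu^\star(s)g(s)\,ds\|_2\le\sqrt d$ for all $g:\mathcal S\to[0,1]$; the features are unknown to the learner. In each episode $k=1,\dots,K$ the learner chooses a stochastic policy $\pi_k$, starts at $s_0\sim d_0$ and acts with $\pi_k$. With $V_k^\pi=\mathbb E_{s_0\sim d_0}\mathbb E[\sum_{\tau\ge0}\gamma^\tau\ell_k(s_\tau,a_\tau)\mid\pi,P^\star,s_0]$, the expected regret is $\mathcal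 R_K=\mathbb E[\sum_{k=1}^K(V_k^{\pi_k}-V_k^{\pi^\star})]$, where $\pi^\star\in\arg\min_\pi\mathbb E[\sum_{k=1}^K V_k^\pi]$ over all stochastic policies. *)

theory Defs
  imports "HOL-Probability.Probability"
begin

text \<open>
Finite tabular encoding: states are the naturals below S, actions the naturals below A.
A transition kernel is P s a s', a stochastic policy is pol s a, a loss is l s a,
an initial distribution is d0 s.
\<close>

type_synonym kernel = "nat \<Rightarrow> nat \<Rightarrow> nat \<Rightarrow> real"
type_synonym policy = "nat \<Rightarrow> nat \<Rightarrow> real"
type_synonym loss = "nat \<Rightarrow> nat \<Rightarrow> real"
type_synonym trajectory = "nat \<Rightarrow> nat \<times> nat"

definition is_distr :: "nat \<Rightarrow> (nat \<Rightarrow> real) \<Rightarrow> bool" where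
  "is_distr n p \<longleftrightarrow> (\<forall>i<n. 0 \<le> p i) \<and> (\<Sum>i<n. p i) = 1"

definition stoch_policy :: "nat \<Rightarrow> nat \<Rightarrow> policy \<Rightarrow> bool" where
  "stoch_policy S A pol \<longleftrightarrow> (\<forall>s<S. is_distr A (pol s))"

definition valid_mdp :: "nat \<Rightarrow> nat \<Rightarrow> kernel \<Rightarrow> (nat \<Rightarrow> real) \<Rightarrow> loss \<Rightarrow> bool" where
  "valid_mdp S A P d0 l \<longleftrightarrow>
     (\<forall>s<S. \<forall>a<A. is_distr S (P s a)) \<and> is_distr S d0 \<and>
     (\<forall>s<S. \<forall>a<A. 0 \<le> l s a \<and> l s a \<le> 1)"

definition low_rank :: "nat \<Rightarrow> nat \<Rightarrow> nat \<Rightarrow> kernel \<Rightarrow> bool" where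
  "low_rank d S A P \<longleftrightarrow>
     (\<exists>(phi :: nat \<Rightarrow> nat \<Rightarrow> nat \<Rightarrow> real) (mu :: nat \<Rightarrow> nat \<Rightarrow> real).
        (\<forall>s<S. \<forall>a<A. \<forall>s'<S. P s a s' = (\<Sum>i<d. mu s' i * phi s a i)) \<and>
        (\<forall>s<S. \<forall>a<A. sqrt (\<Sum>i<d. (phi s a i)\<^sup>2) \<le> 1) \<and>
        (\<forall>g :: nat \<Rightarrow> real. (\<forall>s<S. 0 \<le> g s \<and> g s \<le> 1) \<longrightarrow>
            sqrt (\<Sum>i<d. (\<Sum>s<S. mu s i * g s)\<^sup>2) \<le> sqrt (real d)))"

primrec state_dist :: "nat \<Rightarrow> nat \<Rightarrow> kernel \<Rightarrow> (nat \<Rightarrow> real) \<Rightarrow> policy \<Rightarrow> nat \<Rightarrow> nat \<Rightarrow> real" where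
  "state_dist S A P d0 pol 0 = d0"
| "state_dist S A P d0 pol (Suc t) =
     (\<lambda>s'. \<Sum>s<S. \<Sum>a<A. state_dist S A P d0 pol t s * pol s a * P s a s')"

definition value_fn :: "nat \<Rightarrow> nat \<Rightarrow> kernel \<Rightarrow> (nat \<Rightarrow> real) \<Rightarrow> loss \<Rightarrow> real \<Rightarrow> policy \<Rightarrow> real" where
  "value_fn S A P d0 l \<gamma> pol =
     (\<Sum>t. \<gamma> ^ t * (\<Sum>s<S. \<Sum>a<A. state_dist S A P d0 pol t s * pol s a * l s a))"

text \<open>Sampling an index below n from the distribution p using a uniform number x in [0,1]
  (inverse-CDF method).\<close>
definition smp :: "(nat \<Rightarrow> real) \<Rightarrow> nat \<Rightarrow> real \<Rightarrow> nat" where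
  "smp p n x = (if \<exists>i<n. x < (\<Sum>j\<le>i. p j) then (LEAST i. x < (\<Sum>j\<le>i. p j)) else 0)"

text \<open>Infinite trajectory of one episode driven by uniform seeds u: u 0 draws s_0,
  u (2t+1) draws a_t, u (2t+2) draws s_{t+1}.\<close>
primrec traj_state :: "nat \<Rightarrow> nat \<Rightarrow> kernel \<Rightarrow> (nat \<Rightarrow> real) \<Rightarrow> policy \<Rightarrow> (nat \<Rightarrow> real) \<Rightarrow> nat \<Rightarrow> nat" where
  "traj_state S A P d0 pol u 0 = smp d0 S (u 0)"
| "traj_state S A P d0 pol u (Suc t) =
     (let s = traj_state S A P d0 pol u t
      in smp (P s (smp (pol s) A (u (2 * t + 1)))) S (u (2 * t + 2)))"

definition traj :: "nat \<Rightarrow> nat \<Rightarrow> kernel \<Rightarrow> (nat \<Rightarrow> real) \<Rightarrow> policy \<Rightarrow> (nat \<Rightarrow> real) \<Rightarrow> trajectory" where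
  "traj S A P d0 pol u t =
     (let s = traj_state S A P d0 pol u t in (s, smp (pol s) A (u (2 * t + 1))))"

text \<open>A learning algorithm: for episode k (0-based) it maps
  (internal random seed, trajectories of episodes < k, losses revealed after episodes < k)
  to a policy. Entries at indices \<ge> k of the history are masked.\<close>
type_synonym algorithm =
  "nat \<Rightarrow> real \<times> (nat \<Rightarrow> trajectory) \<times> (nat \<Rightarrow> loss) \<Rightarrow> policy"

definition alg_input_space :: "(real \<times> (nat \<Rightarrow> trajectory) \<times> (nat \<Rightarrow> loss)) measure" where
  "alg_input_space =
     borel \<Otimes>\<^sub>M (PiM UNIV (\<lambda>_. PiM UNIV (\<lambda>_. count_space UNIV)))
           \<Otimes>\<^sub>M (PiM UNIV (\<lambda>_. PiM UNIV (\<lambda>_. PiM UNIV (\<lambda>_. borel))))"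

definition valid_alg :: "nat \<Rightarrow> nat \<Rightarrow> algorithm \<Rightarrow> bool" where
  "valid_alg S A Alg \<longleftrightarrow>
     (\<forall>k x. stoch_policy S A (Alg k x)) \<and>
     (\<forall>k s a. (\<lambda>x. Alg k x s a) \<in> borel_measurable alg_input_space)"

text \<open>Probability space of all randomness: i.i.d. uniform [0,1] seeds indexed by nat \<times> nat.
  Seed (0,0) is the algorithm's internal randomness; row Suc k drives episode k.\<close>
definition seed_space :: "(nat \<times> nat \<Rightarrow> real) measure" where
  "seed_space = PiM UNIV (\<lambda>_. uniform_measure lborel {0..1::real})"

primrec run :: "nat \<Rightarrow> nat \<Rightarrow> kernel \<Rightarrow> (nat \<Rightarrow> real) \<Rightarrow> loss \<Rightarrow> algorithm \<Rightarrow>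
                 nat \<Rightarrow> (nat \<times> nat \<Rightarrow> real) \<Rightarrow> (policy \<times> trajectory) list" where
  "run S A P d0 l Alg 0 \<omega> = []"
| "run S A P d0 l Alg (Suc k) \<omega> =
     (let h = run S A P d0 l Alg k \<omega>;
          H = (\<lambda>j. if j < length h then snd (h ! j) else (\<lambda>_. (0, 0)));
          L = (\<lambda>j. if j < length h then l else (\<lambda>_ _. 0));
          pol = Alg k (\<omega> (0, 0), H, L)
      in h @ [(pol, traj S A P d0 pol (\<lambda>t. \<omega> (Suc k, t)))])"

definition regret :: "nat \<Rightarrow> nat \<Rightarrow> kernel \<Rightarrow> (nat \<Rightarrow> real) \<Rightarrow> loss \<Rightarrow> real \<Rightarrow>
                      algorithm \<Rightarrow> nat \<Rightarrow> real" where
  "regret S A P d0 l \<gamma> Alg K =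
     (let Vstar = (INF pol \<in> {pol. stoch_policy S A pol}. value_fn S A P d0 l \<gamma> pol)
      in \<integral>\<omega>. (\<Sum>k<K. value_fn S A P d0 l \<gamma> (fst (run S A P d0 l Alg K \<omega> ! k)) - Vstar)
           \<partial>seed_space)"

end

theory Submission
  imports Defs
begin

text \<open>
  The hard instances have a free and a costly absorbing state and \<open>m = d - 1\<close> initial states.
  From an initial state \<open>s\<close> every action reaches the free state with probability \<open>1/2\<close>, except a
  hidden action \<open>\<theta> s\<close>, which adds \<open>\<epsilon>\<close>; such a kernel factors through \<open>\<real>\<^sup>2\<close>, so it has low
  rank. Each episode in which the learner misses \<open>\<theta> s\<close> at its initial state \<open>s\<close> costs
  \<open>\<gamma> \<epsilon> / (1 - \<gamma>)\<close> in expectation.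

  Compare the instance with hidden action \<open>a\<close> at \<open>s\<close> with the one without any good action at
  \<open>s\<close>. The laws of the whole run differ by a likelihood ratio, and a pointwise form of Pinsker's
  inequality bounds the change in the expected number of times \<open>a\<close> is played at \<open>s\<close> by the
  Kullback-Leibler divergence of the runs, which is \<open>O(\<epsilon>\<^sup>2 / m)\<close> per such play. Summing over
  \<open>a\<close> and averaging over \<open>\<theta>\<close>, for \<open>\<epsilon>\<^sup>2 = A m / (300 K)\<close> some \<open>\<theta>\<close> makes the learner miss the
  hidden action in half of the episodes, so its regret is at least \<open>\<gamma> \<epsilon> K / (2 (1 - \<gamma>))\<close>.
\<close>

section \<open>Independent uniform seeds\<close>

definition unif01 :: "real measure" where
  "unif01 = uniform_measure lborel {0..1}"

definition merge_seeds ::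
    "(nat \<times> nat) set \<Rightarrow> (nat \<times> nat \<Rightarrow> real) \<Rightarrow> (nat \<times> nat \<Rightarrow> real) \<Rightarrow> nat \<times> nat \<Rightarrow> real" where
  "merge_seeds I \<omega> r = (\<lambda>i. if i \<in> I then r i else \<omega> i)"

lemma prob_space_unif01: "prob_space unif01"
  unfolding unif01_def by (rule prob_space_uniform_measure) auto

interpretation unif01: prob_space unif01
  by (rule prob_space_unif01)

lemma sets_unif01[measurable_cong]: "sets unif01 = sets borel"
  unfolding unif01_def by simp

lemma space_unif01[simp]: "space unif01 = UNIV"
  unfolding unif01_def by simp

lemma seed_space_eq_PiM: "seed_space = PiM UNIV (\<lambda>_. unif01)"
  unfolding seed_space_def unif01_def ..

lemma prob_space_seed_space: "prob_space seed_space"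
  unfolding seed_space_eq_PiM by (intro prob_space_PiM prob_space_unif01)

interpretation seed: prob_space seed_space
  by (rule prob_space_seed_space)

lemma space_seed_space[simp]: "space seed_space = UNIV"
  unfolding seed_space_eq_PiM by (auto simp: space_PiM)

lemma measurable_seed[measurable]: "(\<lambda>\<omega>. \<omega> i) \<in> borel_measurable seed_space"
  unfolding seed_space_eq_PiM by (simp add: measurable_cong_sets[OF refl sets_unif01[symmetric]])

lemma measurable_merge_seeds[measurable]:
  "(\<lambda>(\<omega>, r). merge_seeds I \<omega> r) \<in> measurable (seed_space \<Otimes>\<^sub>M seed_space) seed_space"
  unfolding seed_space_eq_PiM merge_seeds_def
  by (rule measurable_PiM_single')
     (auto simp: space_PiM split_beta'
       intro!: measurable_compose[OF measurable_snd measurable_component_singleton]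
               measurable_compose[OF measurable_fst measurable_component_singleton])

lemma measurable_fun_upd_seed: "(\<lambda>x. fun_upd \<omega> i x) \<in> measurable unif01 seed_space"
  unfolding seed_space_eq_PiM
  by (rule measurable_PiM_single') (auto simp: space_PiM)

lemma distr_merge_seeds:
  "distr (seed_space \<Otimes>\<^sub>M seed_space) seed_space (\<lambda>(\<omega>, r). merge_seeds I \<omega> r) = seed_space"
proof (rule measure_eqI_PiM_infinite[symmetric, OF _ _ _ seed.finite_measure_axioms])
  show "sets seed_space = sets (PiM UNIV (\<lambda>_. unif01))"
    "sets (distr (seed_space \<Otimes>\<^sub>M seed_space) seed_space (\<lambda>(\<omega>, r). merge_seeds I \<omega> r)) =
       sets (PiM UNIV (\<lambda>_. unif01))"
    by (simp_all add: seed_space_eq_PiM)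
  fix B J assume J: "finite (J :: (nat \<times> nat) set)" "J \<subseteq> UNIV"
    and B: "\<And>i. i \<in> J \<Longrightarrow> B i \<in> sets unif01"
  let ?cyl = "\<lambda>J'. prod_emb UNIV (\<lambda>_. unif01) J' (Pi\<^sub>E J' B)"
  have cyl: "?cyl J' \<in> sets seed_space" "emeasure seed_space (?cyl J') = (\<Prod>i\<in>J'. emeasure unif01 (B i))"
    if "J' \<subseteq> J" for J'
    using that J B finite_subset[OF that]
    unfolding seed_space_eq_PiM by (auto intro!: sets_PiM_I emeasure_PiM_emb prob_space_unif01)
  have "(\<lambda>(\<omega>, r). merge_seeds I \<omega> r) -` ?cyl J \<inter> space (seed_space \<Otimes>\<^sub>M seed_space) =
      ?cyl (J - I) \<times> ?cyl (J \<inter> I)"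
    by (auto simp: prod_emb_def space_pair_measure merge_seeds_def PiE_iff restrict_def
        extensional_def split: if_splits)
  then have "emeasure (distr (seed_space \<Otimes>\<^sub>M seed_space) seed_space (\<lambda>(\<omega>, r). merge_seeds I \<omega> r)) (?cyl J)
      = emeasure seed_space (?cyl (J - I)) * emeasure seed_space (?cyl (J \<inter> I))"
    using cyl[of J] cyl[of "J - I"] cyl[of "J \<inter> I"]
    by (simp add: emeasure_distr seed.emeasure_pair_measure_Times)
  also have "\<dots> = (\<Prod>i\<in>(J - I) \<union> (J \<inter> I). emeasure unif01 (B i))"
    using cyl[of "J - I"] cyl[of "J \<inter> I"] J by (simp add: prod.union_disjoint Diff_Int_distrib2)
  also have "(J - I) \<union> (J \<inter> I) = J" by auto
  finally show "emeasure seed_space (?cyl J) =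
      emeasure (distr (seed_space \<Otimes>\<^sub>M seed_space) seed_space (\<lambda>(\<omega>, r). merge_seeds I \<omega> r)) (?cyl J)"
    using cyl[of J] by simp
qed

lemma (in prob_space) integrable_bounded:
  fixes f :: "'a \<Rightarrow> real"
  assumes "f \<in> borel_measurable M" "\<And>x. \<bar>f x\<bar> \<le> B"
  shows "integrable M f"
  using assms by (intro integrable_const_bound[of _ B]) auto

lemma (in prob_space) abs_integral_le_bound:
  fixes f :: "'a \<Rightarrow> real"
  assumes "\<And>x. \<bar>f x\<bar> \<le> B"
  shows "\<bar>\<integral>x. f x \<partial>M\<bar> \<le> B"
proof (cases "integrable M f")
  case True
  have "\<bar>\<integral>x. f x \<partial>M\<bar> \<le> (\<integral>x. \<bar>f x\<bar> \<partial>M)" by (rule integral_abs_bound)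
  also have "\<dots> \<le> (\<integral>x. B \<partial>M)" using True assms by (intro integral_mono) auto
  finally show ?thesis by (simp add: prob_space)
next
  case False
  obtain x where "x \<in> space M" using not_empty by blast
  then show ?thesis using assms[of x] False by (simp add: not_integrable_integral_eq)
qed

lemma integral_merge_seeds:
  fixes f :: "_ \<Rightarrow> real"
  assumes f: "f \<in> borel_measurable seed_space" and B: "\<And>\<omega>. \<bar>f \<omega>\<bar> \<le> B"
  shows "(\<integral>\<omega>. f \<omega> \<partial>seed_space) = (\<integral>\<omega>. (\<integral>r. f (merge_seeds I \<omega> r) \<partial>seed_space) \<partial>seed_space)"
proof -
  interpret pair_sigma_finite seed_space seed_space by unfold_locales
  interpret seed2: prob_space "seed_space \<Otimes>\<^sub>M seed_space"
    by (intro prob_space_pair prob_space_seed_space)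
  have fm: "(\<lambda>(\<omega>, r). f (merge_seeds I \<omega> r)) \<in> borel_measurable (seed_space \<Otimes>\<^sub>M seed_space)"
    using measurable_compose[OF measurable_merge_seeds f] by (simp add: case_prod_beta')
  have "(\<integral>\<omega>. f \<omega> \<partial>seed_space) =
      (\<integral>\<omega>. f \<omega> \<partial>distr (seed_space \<Otimes>\<^sub>M seed_space) seed_space (\<lambda>(\<omega>, r). merge_seeds I \<omega> r))"
    by (simp add: distr_merge_seeds)
  also have "\<dots> = (\<integral>z. f (case z of (\<omega>, r) \<Rightarrow> merge_seeds I \<omega> r) \<partial>(seed_space \<Otimes>\<^sub>M seed_space))"
    by (rule integral_distr[OF measurable_merge_seeds f])
  also have "\<dots> = (\<integral>\<omega>. (\<integral>r. f (merge_seeds I \<omega> r) \<partial>seed_space) \<partial>seed_space)"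
  proof -
    have "integrable (seed_space \<Otimes>\<^sub>M seed_space) (\<lambda>(\<omega>, r). f (merge_seeds I \<omega> r))"
      by (rule seed2.integrable_bounded[OF fm]) (use B in auto)
    from integral_fst'[OF this] show ?thesis by (simp add: split_beta')
  qed
  finally show ?thesis .
qed

lemma integral_resample_seed:
  fixes f :: "_ \<Rightarrow> real"
  assumes f: "f \<in> borel_measurable seed_space" and B: "\<And>\<omega>. \<bar>f \<omega>\<bar> \<le> B"
  shows "(\<integral>\<omega>. f \<omega> \<partial>seed_space) = (\<integral>\<omega>. (\<integral>x. f (fun_upd \<omega> i x) \<partial>unif01) \<partial>seed_space)"
proof -
  have "distr seed_space unif01 (\<lambda>r. r i) = unif01"
    unfolding seed_space_eq_PiM by (rule distr_PiM_component) (auto intro: prob_space_unif01)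
  then have "(\<integral>x. f (fun_upd \<omega> i x) \<partial>unif01) = (\<integral>r. f (fun_upd \<omega> i (r i)) \<partial>seed_space)" for \<omega>
    using integral_distr[of "\<lambda>r. r i" seed_space unif01 "\<lambda>x. f (fun_upd \<omega> i x)"]
      measurable_compose[OF measurable_fun_upd_seed f]
    by (simp add: seed_space_eq_PiM)
  moreover have "merge_seeds {i} \<omega> r = fun_upd \<omega> i (r i)" for \<omega> r
    by (auto simp: merge_seeds_def)
  ultimately show ?thesis
    using integral_merge_seeds[OF f B, of "{i}"] by simp
qed

section \<open>Inverse-CDF sampling\<close>

lemma smp_less: "0 < n \<Longrightarrow> smp p n x < n"
proof (cases "\<exists>i<n. x < (\<Sum>j\<le>i. p j)")
  case True
  then obtain i where "i < n" "x < (\<Sum>j\<le>i. p j)" by blast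
  then have "(LEAST i. x < (\<Sum>j\<le>i. p j)) \<le> i" by (intro Least_le)
  then show ?thesis using True \<open>i < n\<close> by (simp add: smp_def)
qed (auto simp: smp_def)

lemma smp_less_support:
  assumes "\<And>i. k \<le> i \<Longrightarrow> p i = 0" "0 < k"
  shows "smp p n x < k"
proof (cases "\<exists>i<n. x < (\<Sum>j\<le>i. p j)")
  case True
  then obtain i where i: "x < (\<Sum>j\<le>i. p j)" by blast
  have "x < (\<Sum>j\<le>min i (k - 1). p j)"
  proof (cases "i \<le> k - 1")
    case False
    have "p j = 0" if "j \<in> {..i} - {..k - 1}" for j
      using that assms(2) by (intro assms(1)) auto
    then have "(\<Sum>j\<le>i. p j) = (\<Sum>j\<le>k - 1. p j)"
      using False by (intro sum.mono_neutral_right) auto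
    then show ?thesis using i False by simp
  qed (use i in auto)
  then have "(LEAST i. x < (\<Sum>j\<le>i. p j)) \<le> k - 1"
    using Least_le[of "\<lambda>i. x < (\<Sum>j\<le>i. p j)"] by fastforce
  then have "(LEAST i. x < (\<Sum>j\<le>i. p j)) < k" using assms(2) by arith
  then show ?thesis using True by (simp add: smp_def)
qed (use assms(2) in \<open>auto simp: smp_def\<close>)

lemma smp_eq_iff:
  assumes p: "is_distr n p" and x: "0 \<le> x" "x < 1" and i: "i < n"
  shows "smp p n x = i \<longleftrightarrow> (\<Sum>j<i. p j) \<le> x \<and> x < (\<Sum>j\<le>i. p j)"
proof -
  have nonneg: "\<forall>i<n. 0 \<le> p i" and "(\<Sum>i<n. p i) = 1"
    using p by (auto simp: is_distr_def)
  then have "(\<Sum>j\<le>n - 1. p j) = 1" using i by (metis Suc_diff_1 lessThan_Suc_atMost gr_implies_not0 not_gr0)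
  then have ex: "\<exists>i<n. x < (\<Sum>j\<le>i. p j)" using x i by (intro exI[of _ "n - 1"]) auto
  define L where "L = (LEAST i. x < (\<Sum>j\<le>i. p j))"
  have smp: "smp p n x = L" using ex by (simp add: smp_def L_def)
  obtain i0 where "x < (\<Sum>j\<le>i0. p j)" using ex by blast
  then have L1: "x < (\<Sum>j\<le>L. p j)" unfolding L_def by (rule LeastI)
  have L2: "\<not> x < (\<Sum>k\<le>j. p k)" if "j < L" for j using that unfolding L_def by (rule not_less_Least)
  show ?thesis
  proof
    assume "smp p n x = i"
    then have "L = i" using smp by simp
    then show "(\<Sum>j<i. p j) \<le> x \<and> x < (\<Sum>j\<le>i. p j)"
      using L1 L2[of "i - 1"] x by (cases i) (auto simp: lessThan_Suc_atMost not_less)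
  next
    assume h: "(\<Sum>j<i. p j) \<le> x \<and> x < (\<Sum>j\<le>i. p j)"
    have "L \<le> i" unfolding L_def using h by (simp add: Least_le)
    moreover have "\<not> L < i"
    proof
      assume "L < i"
      then obtain i' where i': "i = Suc i'" "L \<le> i'" by (cases i) auto
      have "(\<Sum>j\<le>L. p j) \<le> (\<Sum>j\<le>i'. p j)" using nonneg i i' by (intro sum_mono2) auto
      then show False using h L1 i' by (simp add: lessThan_Suc_atMost)
    qed
    ultimately show "smp p n x = i" using smp by simp
  qed
qed

lemma Least_nat_eq_iff:
  assumes "\<exists>i::nat. P i"
  shows "(LEAST i. P i) = a \<longleftrightarrow> P a \<and> (\<forall>j<a. \<not> P j)"
  using assms by (metis LeastI_ex Least_equality linorder_not_le not_less_Least)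

lemma measurable_smp[measurable]:
  assumes [measurable]: "\<And>i. (\<lambda>\<omega>. p \<omega> i) \<in> borel_measurable M" "x \<in> borel_measurable M"
  shows "(\<lambda>\<omega>. smp (p \<omega>) n (x \<omega>)) \<in> measurable M (count_space UNIV)"
proof -
  have [measurable]: "(\<lambda>\<omega>. (\<Sum>j\<le>i. p \<omega> j)) \<in> borel_measurable M" for i by measurable
  have eq: "smp (p \<omega>) n (x \<omega>) = a \<longleftrightarrow>
     ((\<exists>i<n. x \<omega> < (\<Sum>j\<le>i. p \<omega> j)) \<and> x \<omega> < (\<Sum>j\<le>a. p \<omega> j) \<and> (\<forall>j<a. \<not> x \<omega> < (\<Sum>k\<le>j. p \<omega> k)))
     \<or> ((\<not> (\<exists>i<n. x \<omega> < (\<Sum>j\<le>i. p \<omega> j))) \<and> a = 0)" for \<omega> a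
  proof (cases "\<exists>i<n. x \<omega> < (\<Sum>j\<le>i. p \<omega> j)")
    case True
    then have "\<exists>i. x \<omega> < (\<Sum>j\<le>i. p \<omega> j)" by blast
    then show ?thesis using True by (simp add: smp_def Least_nat_eq_iff)
  qed (auto simp: smp_def)
  have "{\<omega> \<in> space M. smp (p \<omega>) n (x \<omega>) = a} \<in> sets M" for a
    unfolding eq by measurable
  then show ?thesis
    unfolding measurable_count_space_eq2_countable by (auto simp: vimage_def Int_def conj_commute)
qed

lemma measure_unif01_atLeastLessThan:
  assumes "0 \<le> a" "a \<le> b" "b \<le> 1"
  shows "measure unif01 {a..<b} = b - a"
proof -
  have "measure unif01 {a..<b} = measure lborel ({0..1} \<inter> {a..<b}) / measure lborel {0..1::real}"
    unfolding unif01_def by (rule measure_uniform_measure) auto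
  also have "{0..1} \<inter> {a..<b} = {a..<b}" using assms by auto
  finally show ?thesis using assms by simp
qed

text \<open>\<open>smp p n x = i\<close> exactly when the seed \<open>x\<close> falls into
  \<open>[p 0 + \<dots> + p (i - 1), p 0 + \<dots> + p i)\<close>, an interval of length \<open>p i\<close>.\<close>

lemma integral_smp:
  fixes g :: "nat \<Rightarrow> real"
  assumes p: "is_distr n p"
  shows "(\<integral>x. g (smp p n x) \<partial>unif01) = (\<Sum>i<n. p i * g i)"
proof -
  have nonneg: "\<forall>i<n. 0 \<le> p i" and total: "(\<Sum>i<n. p i) = 1" using p by (auto simp: is_distr_def)
  then have n: "0 < n" by (cases n) auto
  let ?a = "\<lambda>i. (\<Sum>j<i. p j)" and ?b = "\<lambda>i. (\<Sum>j\<le>i. p j)"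
  have interval: "0 \<le> ?a i" "?a i \<le> ?b i" "?b i \<le> 1" if "i < n" for i
  proof -
    show "0 \<le> ?a i" "?a i \<le> ?b i" using nonneg that by (auto intro: sum_nonneg simp: lessThan_Suc_atMost[symmetric])
    have "?b i \<le> (\<Sum>j<n. p j)" using nonneg that by (intro sum_mono2) auto
    then show "?b i \<le> 1" using total by simp
  qed
  have ae: "AE x in unif01. g (smp p n x) = (\<Sum>i<n. g i * indicator {?a i..<?b i} x)"
  proof -
    have "AE x in unif01. x \<in> {0..1} \<and> x \<noteq> 1"
      unfolding unif01_def by (rule AE_uniform_measureI) (auto intro!: AE_I'[of "{1}"])
    then show ?thesis
    proof eventually_elim
      case (elim x)
      then have x: "0 \<le> x" "x < 1" by auto
      have "(\<Sum>i<n. g i * indicator {?a i..<?b i} x) = (\<Sum>i<n. if i = smp p n x then g i else 0)"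
        using smp_eq_iff[OF p x] by (intro sum.cong) (auto simp: indicator_def)
      then show ?case using smp_less[OF n] by simp
    qed
  qed
  have "(\<integral>x. g (smp p n x) \<partial>unif01) = (\<integral>x. (\<Sum>i<n. g i * indicator {?a i..<?b i} x) \<partial>unif01)"
  proof (rule integral_cong_AE[OF _ _ ae])
    show "(\<lambda>x. g (smp p n x)) \<in> borel_measurable unif01"
      by (rule measurable_compose[OF measurable_smp[where p="\<lambda>_. p" and x="\<lambda>x. x"]])
        (auto simp: measurable_cong_sets[OF sets_unif01 refl])
    show "(\<lambda>x. \<Sum>i<n. g i * indicator {?a i..<?b i} x) \<in> borel_measurable unif01"
      unfolding measurable_cong_sets[OF sets_unif01 refl] by measurable
  qed
  also have "\<dots> = (\<Sum>i<n. g i * measure unif01 {?a i..<?b i})"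
    by (subst Bochner_Integration.integral_sum)
      (auto simp: sets_unif01 unif01.emeasure_finite less_top[symmetric] intro!: integrable_real_indicator)
  also have "\<dots> = (\<Sum>i<n. p i * g i)"
    using interval by (intro sum.cong refl)
      (simp add: measure_unif01_atLeastLessThan lessThan_Suc_atMost[symmetric])
  finally show ?thesis .
qed

lemma integral_seed_smp:
  fixes G :: "(nat \<times> nat \<Rightarrow> real) \<Rightarrow> nat \<Rightarrow> real"
  assumes meas: "(\<lambda>\<omega>. G \<omega> (smp (p \<omega>) n (\<omega> i))) \<in> borel_measurable seed_space"
    and bound: "\<And>\<omega>. \<bar>G \<omega> (smp (p \<omega>) n (\<omega> i))\<bar> \<le> B"
    and p: "\<And>\<omega>. is_distr n (p \<omega>)"
    and G_upd: "\<And>\<omega> x. G (fun_upd \<omega> i x) = G \<omega>" and p_upd: "\<And>\<omega> x. p (fun_upd \<omega> i x) = p \<omega>"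
  shows "(\<integral>\<omega>. G \<omega> (smp (p \<omega>) n (\<omega> i)) \<partial>seed_space) = (\<integral>\<omega>. (\<Sum>k<n. p \<omega> k * G \<omega> k) \<partial>seed_space)"
proof -
  have "(\<integral>\<omega>. G \<omega> (smp (p \<omega>) n (\<omega> i)) \<partial>seed_space) =
      (\<integral>\<omega>. (\<integral>x. G \<omega> (smp (p \<omega>) n x) \<partial>unif01) \<partial>seed_space)"
    using integral_resample_seed[OF meas bound, of i] by (simp add: G_upd p_upd)
  then show ?thesis by (simp add: integral_smp[OF p])
qed

lemma abs_le_sum_abs:
  fixes f :: "'a \<Rightarrow> 'b::ordered_ab_group_add_abs"
  shows "finite X \<Longrightarrow> x \<in> X \<Longrightarrow> \<bar>f x\<bar> \<le> (\<Sum>y\<in>X. \<bar>f y\<bar>)"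
  using sum.remove[of X x "\<lambda>y. \<bar>f y\<bar>"] by (simp add: sum_nonneg)

section \<open>Runs of a learner\<close>

text \<open>The input that \<open>run\<close> passes to the learner after the history \<open>h\<close>.\<close>

definition hist_traj :: "(policy \<times> trajectory) list \<Rightarrow> nat \<Rightarrow> trajectory" where
  "hist_traj h = (\<lambda>j. if j < length h then snd (h ! j) else (\<lambda>_. (0, 0)))"

definition hist_loss :: "loss \<Rightarrow> (policy \<times> trajectory) list \<Rightarrow> nat \<Rightarrow> loss" where
  "hist_loss l h = (\<lambda>j. if j < length h then l else (\<lambda>_ _. 0))"

definition alg_policy :: "algorithm \<Rightarrow> loss \<Rightarrow> nat \<Rightarrow> real \<Rightarrow> (policy \<times> trajectory) list \<Rightarrow> policy" where
  "alg_policy Alg l k z h = Alg k (z, hist_traj h, hist_loss l h)"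

lemma run_Suc_eq:
  "run S A P d0 l Alg (Suc k) \<omega> = run S A P d0 l Alg k \<omega> @
     [(alg_policy Alg l k (\<omega> (0, 0)) (run S A P d0 l Alg k \<omega>),
       traj S A P d0 (alg_policy Alg l k (\<omega> (0, 0)) (run S A P d0 l Alg k \<omega>)) (\<lambda>t. \<omega> (Suc k, t)))]"
  by (simp add: Let_def hist_traj_def hist_loss_def alg_policy_def)

lemma length_run[simp]: "length (run S A P d0 l Alg K \<omega>) = K"
  by (induction K) (simp_all add: Let_def)

lemma run_nth_prefix: "k < K \<Longrightarrow> run S A P d0 l Alg K \<omega> ! k = run S A P d0 l Alg (Suc k) \<omega> ! k"
proof (induction K)
  case (Suc K)
  show ?case
  proof (cases "k < K")
    case True
    then show ?thesis using Suc by (simp add: Let_def nth_append)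
  next
    case False
    then have "k = K" using Suc.prems by simp
    then show ?thesis by simp
  qed
qed simp

lemma fst_run_nth:
  "k < K \<Longrightarrow> fst (run S A P d0 l Alg K \<omega> ! k) = alg_policy Alg l k (\<omega> (0, 0)) (run S A P d0 l Alg k \<omega>)"
  using run_nth_prefix[of k K] by (simp add: run_Suc_eq nth_append del: run.simps)

lemma stoch_policy_run:
  "valid_alg S A Alg \<Longrightarrow> k < K \<Longrightarrow> stoch_policy S A (fst (run S A P d0 l Alg K \<omega> ! k))"
  by (simp add: fst_run_nth alg_policy_def valid_alg_def)

lemma stoch_policy_bounds:
  assumes "stoch_policy S A pol" "s < S" "a < A"
  shows "0 \<le> pol s a \<and> pol s a \<le> 1"
proof -
  have nonneg: "\<forall>i<A. 0 \<le> pol s i" and "(\<Sum>i<A. pol s i) = 1"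
    using assms by (auto simp: stoch_policy_def is_distr_def)
  moreover have "pol s a \<le> (\<Sum>i<A. pol s i)" using nonneg assms(3) by (intro member_le_sum) auto
  ultimately show ?thesis using assms(3) by auto
qed

lemma run_cong:
  assumes "\<omega> (0, 0) = \<omega>' (0, 0)" "\<And>j t. 1 \<le> j \<Longrightarrow> j \<le> K \<Longrightarrow> \<omega> (j, t) = \<omega>' (j, t)"
  shows "run S A P d0 l Alg K \<omega> = run S A P d0 l Alg K \<omega>'"
  using assms
proof (induction K)
  case (Suc K)
  then have "run S A P d0 l Alg K \<omega> = run S A P d0 l Alg K \<omega>'"
    and "(\<lambda>t. \<omega> (Suc K, t)) = (\<lambda>t. \<omega>' (Suc K, t))" by auto
  then show ?case using Suc.prems by (simp only: run_Suc_eq)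
qed simp

definition seed_row :: "nat \<Rightarrow> (nat \<times> nat) set" where
  "seed_row j = {j} \<times> UNIV"

lemma merge_seed_row_row: "(\<lambda>t. merge_seeds (seed_row j) \<omega> r (j, t)) = (\<lambda>t. r (j, t))"
  by (auto simp: merge_seeds_def seed_row_def)

lemma merge_seed_row_alg_seed: "merge_seeds (seed_row (Suc K)) \<omega> r (0, 0) = \<omega> (0, 0)"
  by (auto simp: merge_seeds_def seed_row_def)

lemma run_merge_seed_row: "run S A P d0 l Alg K (merge_seeds (seed_row (Suc K)) \<omega> r) = run S A P d0 l Alg K \<omega>"
  by (rule run_cong) (auto simp: merge_seeds_def seed_row_def)

lemma measurable_pair_count_space:
  fixes f :: "_ \<Rightarrow> 'a::countable" and g :: "_ \<Rightarrow> 'b::countable"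
  assumes "f \<in> measurable M (count_space UNIV)" "g \<in> measurable M (count_space UNIV)"
  shows "(\<lambda>x. (f x, g x)) \<in> measurable M (count_space UNIV)"
proof -
  have "(\<lambda>x. (f x, g x)) -` {(a, b)} \<inter> space M = (f -` {a} \<inter> space M) \<inter> (g -` {b} \<inter> space M)" for a b
    by auto
  then show ?thesis using assms unfolding measurable_count_space_eq2_countable
    by (auto intro!: sets.Int)
qed

lemma borel_measurable_count_space_comp:
  fixes f :: "_ \<Rightarrow> 'a::countable" and h :: "'a \<Rightarrow> real"
  assumes "f \<in> measurable M (count_space UNIV)"
  shows "(\<lambda>x. h (f x)) \<in> borel_measurable M"
  by (rule measurable_compose[OF assms]) simp

lemma measurable_traj_state:
  assumes pol: "\<And>s a. (\<lambda>\<omega>. pol \<omega> s a) \<in> borel_measurable M"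
    and u: "\<And>t. (\<lambda>\<omega>. u \<omega> t) \<in> borel_measurable M"
  shows "(\<lambda>\<omega>. traj_state S A P d0 (pol \<omega>) (u \<omega>) t) \<in> measurable M (count_space UNIV)"
proof (induction t)
  case 0
  show ?case by (simp, rule measurable_smp[where p="\<lambda>_. d0"], auto intro: u)
next
  case (Suc t)
  let ?s = "\<lambda>\<omega>. traj_state S A P d0 (pol \<omega>) (u \<omega>) t"
  have "(\<lambda>\<omega>. smp (pol \<omega> (?s \<omega>)) A (u \<omega> (2 * t + 1))) \<in> measurable M (count_space UNIV)"
    by (rule measurable_compose_countable[where f="\<lambda>s \<omega>. smp (pol \<omega> s) A (u \<omega> (2 * t + 1))", OF _ Suc])
       (rule measurable_smp, auto intro: pol u)
  then have "(\<lambda>\<omega>. (?s \<omega>, smp (pol \<omega> (?s \<omega>)) A (u \<omega> (2 * t + 1)))) \<in> measurable M (count_space UNIV)"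
    by (rule measurable_pair_count_space[OF Suc])
  then have "(\<lambda>\<omega>. (\<lambda>(s, a) \<omega>. smp (P s a) S (u \<omega> (2 * t + 2))) (?s \<omega>, smp (pol \<omega> (?s \<omega>)) A (u \<omega> (2 * t + 1))) \<omega>)
      \<in> measurable M (count_space UNIV)"
    by (rule measurable_compose_countable[rotated]) (auto intro!: measurable_smp[where p="\<lambda>_. P _ _"] u)
  then show ?case by (simp add: Let_def)
qed

lemma measurable_traj:
  assumes pol: "\<And>s a. (\<lambda>\<omega>. pol \<omega> s a) \<in> borel_measurable M"
    and u: "\<And>t. (\<lambda>\<omega>. u \<omega> t) \<in> borel_measurable M"
  shows "(\<lambda>\<omega>. traj S A P d0 (pol \<omega>) (u \<omega>) t) \<in> measurable M (count_space UNIV)"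
proof -
  let ?s = "\<lambda>\<omega>. traj_state S A P d0 (pol \<omega>) (u \<omega>) t"
  have s: "?s \<in> measurable M (count_space UNIV)" by (rule measurable_traj_state[OF pol u])
  have "(\<lambda>\<omega>. smp (pol \<omega> (?s \<omega>)) A (u \<omega> (2 * t + 1))) \<in> measurable M (count_space UNIV)"
    by (rule measurable_compose_countable[where f="\<lambda>s \<omega>. smp (pol \<omega> s) A (u \<omega> (2 * t + 1))", OF _ s])
       (rule measurable_smp, auto intro: pol u)
  then show ?thesis unfolding traj_def Let_def by (rule measurable_pair_count_space[OF s])
qed

lemma measurable_alg_policy:
  assumes Alg: "valid_alg S A Alg" and z: "z \<in> borel_measurable seed_space"
    and h: "\<And>j t. j < K \<Longrightarrow> (\<lambda>\<omega>. snd (h \<omega> ! j) t) \<in> measurable seed_space (count_space UNIV)"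
    and len: "\<And>\<omega>. length (h \<omega>) = K"
  shows "(\<lambda>\<omega>. alg_policy Alg l K (z \<omega>) (h \<omega>) s a) \<in> borel_measurable seed_space"
proof -
  have "(\<lambda>\<omega>. (z \<omega>, hist_traj (h \<omega>), hist_loss l (h \<omega>))) \<in> measurable seed_space alg_input_space"
    unfolding alg_input_space_def
  proof (intro measurable_Pair z)
    show "(\<lambda>\<omega>. hist_loss l (h \<omega>)) \<in> measurable seed_space (PiM UNIV (\<lambda>_. PiM UNIV (\<lambda>_. PiM UNIV (\<lambda>_. borel))))"
      unfolding hist_loss_def len by (rule measurable_const) (auto simp: space_PiM)
    have "(\<lambda>\<omega>. hist_traj (h \<omega>) j t) \<in> measurable seed_space (count_space UNIV)" for j t
      using h by (cases "j < K") (auto simp: hist_traj_def len)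
    then show "(\<lambda>\<omega>. hist_traj (h \<omega>)) \<in> measurable seed_space (PiM UNIV (\<lambda>_. PiM UNIV (\<lambda>_. count_space UNIV)))"
      by (intro measurable_PiM_single') (auto simp: space_PiM)
  qed
  moreover have "(\<lambda>x. Alg K x s a) \<in> borel_measurable alg_input_space"
    using Alg by (simp add: valid_alg_def)
  ultimately show ?thesis unfolding alg_policy_def by (rule measurable_compose)
qed

section \<open>The hard instance\<close>

text \<open>Taking \<open>\<theta> s \<ge> A\<close> gives the reference instance without any good action at \<open>s\<close>.\<close>

definition hard_kernel :: "nat \<Rightarrow> real \<Rightarrow> (nat \<Rightarrow> nat) \<Rightarrow> kernel" where
  "hard_kernel m \<epsilon> \<theta> s a s' = (if s < 2 then (if s' = s then 1 else 0) else
     (if s' = 0 then 1/2 + (if s < m + 2 \<and> a = \<theta> s then \<epsilon> else 0)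
      else if s' = 1 then 1/2 - (if s < m + 2 \<and> a = \<theta> s then \<epsilon> else 0) else 0))"

definition hard_init :: "nat \<Rightarrow> nat \<Rightarrow> real" where
  "hard_init m s = (if 2 \<le> s \<and> s < m + 2 then 1 / real m else 0)"

definition hard_loss :: loss where
  "hard_loss s a = (if s = 1 then 1 else 0)"

lemma hard_kernel_eq_0: "2 \<le> s' \<Longrightarrow> hard_kernel m \<epsilon> \<theta> s a s' = 0"
  by (simp add: hard_kernel_def)

lemma hard_kernel_absorbing: "s < 2 \<Longrightarrow> hard_kernel m \<epsilon> \<theta> s a = (\<lambda>s'. if s' = s then 1 else 0)"
  by (auto simp: hard_kernel_def)

lemma is_distr_hard_kernel:
  assumes "2 \<le> S" "0 \<le> \<epsilon>" "\<epsilon> \<le> 1/2"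
  shows "is_distr S (hard_kernel m \<epsilon> \<theta> s a)"
proof -
  have "(\<Sum>i<S. hard_kernel m \<epsilon> \<theta> s a i) = (\<Sum>i<2. hard_kernel m \<epsilon> \<theta> s a i)"
    using assms by (intro sum.mono_neutral_right) (auto simp: hard_kernel_def)
  also have "\<dots> = 1" by (simp add: hard_kernel_def numeral_2_eq_2)
  finally show ?thesis using assms unfolding is_distr_def by (auto simp: hard_kernel_def)
qed

lemma is_distr_hard_init:
  assumes "1 \<le> m" "m + 2 \<le> S"
  shows "is_distr S (hard_init m)"
proof -
  have "(\<Sum>i<S. hard_init m i) = (\<Sum>i\<in>{2..<m+2}. hard_init m i)"
    using assms by (intro sum.mono_neutral_right) (auto simp: hard_init_def)
  also have "\<dots> = 1" using assms by (simp add: hard_init_def)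
  finally show ?thesis unfolding is_distr_def by (auto simp: hard_init_def)
qed

lemma valid_mdp_hard:
  assumes "m + 2 \<le> S" "1 \<le> m" "0 \<le> \<epsilon>" "\<epsilon> \<le> 1/2"
  shows "valid_mdp S A (hard_kernel m \<epsilon> \<theta>) (hard_init m) hard_loss"
  unfolding valid_mdp_def using assms is_distr_hard_kernel[of S \<epsilon>] is_distr_hard_init
  by (auto simp: hard_loss_def)

text \<open>The kernel only ever moves to states \<open>0\<close> and \<open>1\<close>, so it factors through \<open>\<real>\<^sup>2 \<subseteq> \<real>\<^sup>d\<close>.\<close>

lemma low_rank_hard_kernel:
  assumes d: "2 \<le> d" and e: "0 \<le> \<epsilon>" "\<epsilon> \<le> 1/2"
  shows "low_rank d S A (hard_kernel m \<epsilon> \<theta>)"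
proof -
  define phi where "phi s a i = (if i < 2 then hard_kernel m \<epsilon> \<theta> s a i else 0)" for s a i :: nat
  define mu where "mu s' i = (if s' = i \<and> i < 2 then 1 else (0::real))" for s' i :: nat
  have "hard_kernel m \<epsilon> \<theta> s a s' = (\<Sum>i<d. mu s' i * phi s a i)" for s a s'
  proof -
    have "(\<Sum>i<d. mu s' i * phi s a i) = (\<Sum>i\<in>{0, 1}. mu s' i * phi s a i)"
      using d by (intro sum.mono_neutral_right) (auto simp: mu_def phi_def)
    then show ?thesis by (cases "s' = 0"; cases "s' = 1") (auto simp: mu_def phi_def hard_kernel_eq_0)
  qed
  moreover have "sqrt (\<Sum>i<d. (phi s a i)\<^sup>2) \<le> 1" for s a
  proof -
    let ?p = "hard_kernel m \<epsilon> \<theta> s a 0" and ?q = "hard_kernel m \<epsilon> \<theta> s a 1"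
    have pq: "0 \<le> ?p" "0 \<le> ?q" "?p + ?q \<le> 1" using e by (auto simp: hard_kernel_def)
    have "(\<Sum>i<d. (phi s a i)\<^sup>2) = (\<Sum>i\<in>{0, 1}. (phi s a i)\<^sup>2)"
      using d by (intro sum.mono_neutral_right) (auto simp: phi_def)
    also have "\<dots> = ?p\<^sup>2 + ?q\<^sup>2" by (simp add: phi_def)
    also have "\<dots> \<le> (?p + ?q)\<^sup>2" using pq by (simp add: power2_sum)
    also have "\<dots> \<le> 1" using pq by (simp add: power_le_one)
    finally show ?thesis by simp
  qed
  moreover have "sqrt (\<Sum>i<d. (\<Sum>s<S. mu s i * g s)\<^sup>2) \<le> sqrt (real d)"
    if g: "\<forall>s<S. 0 \<le> g s \<and> g s \<le> 1" for g :: "nat \<Rightarrow> real"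
  proof -
    have "(\<Sum>s<S. mu s i * g s) = (\<Sum>s<S. if s = i then (if i < 2 then g i else 0) else 0)" for i
      by (intro sum.cong refl) (auto simp: mu_def)
    then have "(\<Sum>s<S. mu s i * g s) = (if i < S then (if i < 2 then g i else 0) else 0)" for i
      by (simp add: sum.delta)
    then have "(\<Sum>i<d. (\<Sum>s<S. mu s i * g s)\<^sup>2) \<le> (\<Sum>i<d. 1)"
      using g by (intro sum_mono) (auto simp: power_le_one)
    then show ?thesis by simp
  qed
  ultimately show ?thesis unfolding low_rank_def by blast
qed

definition hard_gain :: "nat \<Rightarrow> nat \<Rightarrow> (nat \<Rightarrow> nat) \<Rightarrow> policy \<Rightarrow> real" where
  "hard_gain m A \<theta> \<pi> = (\<Sum>s\<in>{2..<m+2}. \<Sum>a<A. (if a = \<theta> s then \<pi> s a else 0))"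

lemma hard_gain_eq:
  "\<forall>s\<in>{2..<m+2}. \<theta> s < A \<Longrightarrow> hard_gain m A \<theta> \<pi> = (\<Sum>s\<in>{2..<m+2}. \<pi> s (\<theta> s))"
  unfolding hard_gain_def by (intro sum.cong refl) (simp add: sum.delta')

lemma hard_gain_le:
  assumes S: "m + 2 \<le> S" and \<pi>: "stoch_policy S A \<pi>"
  shows "hard_gain m A \<theta> \<pi> \<le> m"
proof -
  have "hard_gain m A \<theta> \<pi> \<le> (\<Sum>s\<in>{2..<m+2}. \<Sum>a<A. \<pi> s a)"
    unfolding hard_gain_def using \<pi> S
    by (intro sum_mono) (auto simp: stoch_policy_def is_distr_def)
  also have "\<dots> = (\<Sum>s\<in>{2..<m+2}. 1)"
    using \<pi> S by (intro sum.cong refl) (auto simp: stoch_policy_def is_distr_def)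
  finally show ?thesis by simp
qed

lemma state_dist_hard_1:
  assumes S: "m + 2 \<le> S" and \<pi>: "stoch_policy S A \<pi>" and m: "1 \<le> m"
  shows "state_dist S A (hard_kernel m \<epsilon> \<theta>) (hard_init m) \<pi> 1 1 = 1/2 - \<epsilon> / m * hard_gain m A \<theta> \<pi>"
    and "2 \<le> s' \<Longrightarrow> state_dist S A (hard_kernel m \<epsilon> \<theta>) (hard_init m) \<pi> 1 s' = 0"
proof -
  let ?C = "{2..<m+2}" and ?P = "hard_kernel m \<epsilon> \<theta>"
  let ?hit = "\<lambda>s. \<Sum>a<A. (if a = \<theta> s then \<pi> s a else 0)"
  have initial: "(\<Sum>a<A. hard_init m s * \<pi> s a * ?P s a 1) = (1/2 - \<epsilon> * ?hit s) / m"
    if s: "s \<in> ?C" for s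
  proof -
    have "(\<Sum>a<A. hard_init m s * \<pi> s a * ?P s a 1) = (\<Sum>a<A. (\<pi> s a / 2 - \<epsilon> * (if a = \<theta> s then \<pi> s a else 0)) / m)"
      using s by (intro sum.cong refl) (auto simp: hard_init_def hard_kernel_def field_simps)
    also have "\<dots> = ((\<Sum>a<A. \<pi> s a) / 2 - \<epsilon> * ?hit s) / m"
      by (simp only: sum_divide_distrib[symmetric] sum_subtractf sum_distrib_left[symmetric])
    also have "(\<Sum>a<A. \<pi> s a) = 1" using \<pi> s S by (simp add: stoch_policy_def is_distr_def)
    finally show ?thesis .
  qed
  have "state_dist S A ?P (hard_init m) \<pi> 1 1 = (\<Sum>s<S. \<Sum>a<A. hard_init m s * \<pi> s a * ?P s a 1)"
    by simp
  also have "\<dots> = (\<Sum>s\<in>?C. \<Sum>a<A. hard_init m s * \<pi> s a * ?P s a 1)"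
    using S by (intro sum.mono_neutral_right) (auto simp: hard_init_def)
  also have "\<dots> = (\<Sum>s\<in>?C. (1/2 - \<epsilon> * ?hit s) / m)"
    by (rule sum.cong[OF refl initial])
  also have "\<dots> = (\<Sum>s\<in>?C. 1/2 - \<epsilon> * ?hit s) / m"
    by (rule sum_divide_distrib[symmetric])
  also have "(\<Sum>s\<in>?C. 1/2 - \<epsilon> * ?hit s) = m / 2 - \<epsilon> * hard_gain m A \<theta> \<pi>"
    unfolding hard_gain_def sum_subtractf sum_distrib_left[symmetric] by simp
  also have "(m / 2 - \<epsilon> * hard_gain m A \<theta> \<pi>) / m = 1/2 - \<epsilon> / m * hard_gain m A \<theta> \<pi>"
    using m by (simp add: field_simps)
  finally show "state_dist S A ?P (hard_init m) \<pi> 1 1 = 1/2 - \<epsilon> / m * hard_gain m A \<theta> \<pi>" .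
  show "2 \<le> s' \<Longrightarrow> state_dist S A ?P (hard_init m) \<pi> 1 s' = 0"
    by (simp add: hard_kernel_eq_0)
qed

lemma state_dist_hard_Suc:
  assumes S: "m + 2 \<le> S" and \<pi>: "stoch_policy S A \<pi>" and m: "1 \<le> m"
  shows "state_dist S A (hard_kernel m \<epsilon> \<theta>) (hard_init m) \<pi> (Suc t) =
    state_dist S A (hard_kernel m \<epsilon> \<theta>) (hard_init m) \<pi> 1"
proof (induction t)
  case (Suc t)
  let ?P = "hard_kernel m \<epsilon> \<theta>"
  let ?D = "state_dist S A ?P (hard_init m) \<pi> 1"
  have total: "(\<Sum>a<A. \<pi> s a) = 1" if "s < S" for s
    using \<pi> that by (auto simp: stoch_policy_def is_distr_def)
  have out: "?D s = 0" if "2 \<le> s" for s using state_dist_hard_1(2)[OF S \<pi> m that] .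
  show ?case
  proof
    fix s'
    have "state_dist S A ?P (hard_init m) \<pi> (Suc (Suc t)) s' = (\<Sum>s<S. \<Sum>a<A. ?D s * \<pi> s a * ?P s a s')"
      by (simp only: state_dist.simps(2)[of S A ?P "hard_init m" \<pi> "Suc t"] Suc.IH)
    also have "\<dots> = (\<Sum>s<2. \<Sum>a<A. ?D s * \<pi> s a * ?P s a s')"
      using S out by (intro sum.mono_neutral_right) auto
    also have "\<dots> = (\<Sum>s<2. ?D s * (if s' = s then 1 else 0) * (\<Sum>a<A. \<pi> s a))"
      by (intro sum.cong refl)
        (auto simp: hard_kernel_def sum_distrib_left sum_distrib_right mult_ac simp del: state_dist.simps)
    also have "\<dots> = (\<Sum>s<2. if s' = s then ?D s else 0)"
      using S total by (intro sum.cong refl) (auto simp del: state_dist.simps)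
    also have "\<dots> = ?D s'"
      using out[of s'] by (cases "s' < 2") (auto simp del: state_dist.simps)
    finally show "state_dist S A ?P (hard_init m) \<pi> (Suc (Suc t)) s' = ?D s'" .
  qed
qed simp

lemma value_fn_hard:
  assumes S: "m + 2 \<le> S" and \<pi>: "stoch_policy S A \<pi>" and m: "1 \<le> m" and \<gamma>: "0 \<le> \<gamma>" "\<gamma> < 1"
  shows "value_fn S A (hard_kernel m \<epsilon> \<theta>) (hard_init m) hard_loss \<gamma> \<pi> =
    \<gamma> / (1 - \<gamma>) * (1/2 - \<epsilon> / m * hard_gain m A \<theta> \<pi>)"
proof -
  let ?D = "state_dist S A (hard_kernel m \<epsilon> \<theta>) (hard_init m) \<pi>"
  let ?c = "1/2 - \<epsilon> / m * hard_gain m A \<theta> \<pi>"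
  have loss: "(\<Sum>s<S. \<Sum>a<A. ?D t s * \<pi> s a * hard_loss s a) = ?D t 1" for t
  proof -
    have "(\<Sum>s<S. \<Sum>a<A. ?D t s * \<pi> s a * hard_loss s a) = (\<Sum>a<A. ?D t 1 * \<pi> 1 a)"
      using S by (subst sum.mono_neutral_right[of _ "{1}"]) (auto simp: hard_loss_def)
    also have "\<dots> = ?D t 1" using \<pi> S by (simp add: sum_distrib_left[symmetric] stoch_policy_def is_distr_def)
    finally show ?thesis .
  qed
  have "?D (Suc n) 1 = ?c" for n
    using state_dist_hard_Suc[OF S \<pi> m] state_dist_hard_1(1)[OF S \<pi> m] by metis
  then have "(\<lambda>n. \<gamma> ^ Suc n * ?D (Suc n) 1) = (\<lambda>n. (\<gamma> * ?c) * \<gamma> ^ n)"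
    by (simp add: mult_ac)
  moreover have "(\<lambda>n. (\<gamma> * ?c) * \<gamma> ^ n) sums (\<gamma> * ?c / (1 - \<gamma>))"
    using sums_mult[OF geometric_sums[of \<gamma>], of "\<gamma> * ?c"] \<gamma> by simp
  moreover have "?D 0 1 = 0" by (simp add: hard_init_def)
  ultimately have "(\<lambda>n. \<gamma> ^ n * ?D n 1) sums (\<gamma> * ?c / (1 - \<gamma>))"
    using sums_Suc_iff[of "\<lambda>n. \<gamma> ^ n * ?D n 1"] by (simp del: state_dist.simps)
  then show ?thesis unfolding value_fn_def loss by (simp add: sums_iff del: state_dist.simps)
qed

text \<open>After the first transition the hard instance is absorbed in state \<open>0\<close> or \<open>1\<close>, so a
  trajectory is a function of \<open>(s\<^sub>0, a\<^sub>0, s\<^sub>1)\<close> and of the seeds other than the one drawing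
  \<open>s\<^sub>1\<close>; in particular it no longer depends on the kernel.\<close>

fun absorbed_state :: "(nat \<Rightarrow> real) \<Rightarrow> nat \<Rightarrow> nat \<Rightarrow> nat \<Rightarrow> nat" where
  "absorbed_state u S s1 0 = s1"
| "absorbed_state u S s1 (Suc n) = smp (\<lambda>s'. if s' = absorbed_state u S s1 n then 1 else 0) S (u (2 * n + 4))"

definition absorbed_traj :: "nat \<Rightarrow> nat \<Rightarrow> policy \<Rightarrow> (nat \<Rightarrow> real) \<Rightarrow> nat \<Rightarrow> nat \<Rightarrow> nat \<Rightarrow> trajectory" where
  "absorbed_traj S A pol u s0 a0 s1 t = (if t = 0 then (s0, a0) else
      (absorbed_state u S s1 (t - 1), smp (pol (absorbed_state u S s1 (t - 1))) A (u (2 * t + 1))))"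

lemma absorbed_state_less_2: "s1 < 2 \<Longrightarrow> absorbed_state u S s1 n < 2"
  by (induction n) (auto intro: smp_less_support)

lemma absorbed_state_fun_upd: "absorbed_state (u(2 := x)) S s1 n = absorbed_state u S s1 n"
  by (induction n) auto

lemma absorbed_traj_fun_upd: "absorbed_traj S A pol (u(2 := x)) s0 a0 s1 = absorbed_traj S A pol u s0 a0 s1"
  by (auto simp: absorbed_traj_def absorbed_state_fun_upd fun_eq_iff)

lemma absorbed_traj_first:
  "absorbed_traj S A pol u s0 a0 s1 0 = (s0, a0)" "fst (absorbed_traj S A pol u s0 a0 s1 1) = s1"
  "fst (absorbed_traj S A pol u s0 a0 s1 (Suc 0)) = s1"
  by (auto simp: absorbed_traj_def)

lemma traj_state_hard_Suc:
  "traj_state S A (hard_kernel m \<epsilon> \<theta>) d0 pol u (Suc n) =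
    absorbed_state u S (traj_state S A (hard_kernel m \<epsilon> \<theta>) d0 pol u 1) n"
proof (induction n)
  case (Suc n)
  have "traj_state S A (hard_kernel m \<epsilon> \<theta>) d0 pol u 1 < 2"
    by (simp add: Let_def, rule smp_less_support) (simp_all add: hard_kernel_eq_0)
  then have "absorbed_state u S (traj_state S A (hard_kernel m \<epsilon> \<theta>) d0 pol u 1) n < 2"
    by (rule absorbed_state_less_2)
  then show ?case using Suc by (simp add: Let_def hard_kernel_absorbing algebra_simps numeral_eq_Suc)
qed simp

lemma traj_hard_eq:
  "traj S A (hard_kernel m \<epsilon> \<theta>) d0 pol u =
    absorbed_traj S A pol u (smp d0 S (u 0)) (smp (pol (smp d0 S (u 0))) A (u 1))
      (smp (hard_kernel m \<epsilon> \<theta> (smp d0 S (u 0)) (smp (pol (smp d0 S (u 0))) A (u 1))) S (u 2))"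
proof
  fix t
  show "traj S A (hard_kernel m \<epsilon> \<theta>) d0 pol u t =
    absorbed_traj S A pol u (smp d0 S (u 0)) (smp (pol (smp d0 S (u 0))) A (u 1))
      (smp (hard_kernel m \<epsilon> \<theta> (smp d0 S (u 0)) (smp (pol (smp d0 S (u 0))) A (u 1))) S (u 2)) t"
    unfolding traj_def absorbed_traj_def Let_def
    by (cases t) (simp_all only: traj_state_hard_Suc, simp_all add: Let_def numeral_2_eq_2)
qed

lemma seed_row_fun_upd: "(\<lambda>t. (fun_upd \<omega> (j, i) x) (j, t)) = fun_upd (\<lambda>t. \<omega> (j, t)) i x"
  by (auto simp: fun_eq_iff)

lemma integral_first_transition:
  fixes h :: "nat \<Rightarrow> nat \<Rightarrow> nat \<Rightarrow> real" and m j :: nat and \<theta> :: "nat \<Rightarrow> nat"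
  assumes S: "2 \<le> S" and A: "0 < A" and e: "0 \<le> \<epsilon>" "\<epsilon> \<le> 1/2" and d0: "is_distr S d0"
    and pol: "\<And>s. s < S \<Longrightarrow> is_distr A (pol s)"
  defines "tr r \<equiv> traj S A (hard_kernel m \<epsilon> \<theta>) d0 pol (\<lambda>t. r (j, t))"
  shows "(\<integral>r. h (fst (tr r 0)) (snd (tr r 0)) (fst (tr r 1)) \<partial>seed_space)
    = (\<Sum>s0<S. \<Sum>a0<A. \<Sum>s1<S. d0 s0 * pol s0 a0 * hard_kernel m \<epsilon> \<theta> s0 a0 s1 * h s0 a0 s1)"
proof -
  let ?P = "hard_kernel m \<epsilon> \<theta>"
  define S0 where "S0 r = smp d0 S (r (j, 0))" for r :: "nat \<times> nat \<Rightarrow> real"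
  define A0 where "A0 r = smp (pol (S0 r)) A (r (j, 1))" for r
  define S1 where "S1 r = smp (?P (S0 r) (A0 r)) S (r (j, 2))" for r
  have tr: "tr r 0 = (S0 r, A0 r)" "fst (tr r (Suc 0)) = S1 r" for r
    unfolding tr_def by (simp_all add: traj_hard_eq absorbed_traj_first S0_def A0_def S1_def)
  have meas: "(\<lambda>r. tr r t) \<in> measurable seed_space (count_space UNIV)" for t
    unfolding tr_def by (intro measurable_traj) auto
  have pair: "(\<lambda>r. (tr r 0, tr r 1)) \<in> measurable seed_space (count_space UNIV)"
    by (rule measurable_pair_count_space[OF meas meas])
  have m3: "(\<lambda>r. f (S0 r) (A0 r) (S1 r)) \<in> borel_measurable seed_space" for f :: "nat \<Rightarrow> nat \<Rightarrow> nat \<Rightarrow> real"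
    using borel_measurable_count_space_comp[OF pair, of "\<lambda>(x, y). f (fst x) (snd x) (fst y)"] by (simp add: tr)
  have bounds: "S0 r < S" "A0 r < A" "S1 r < S" for r
    unfolding S0_def A0_def S1_def using S A by (auto intro: smp_less)
  define g2 where "g2 s a = (\<Sum>s1<S. ?P s a s1 * h s a s1)" for s a
  define g1 where "g1 s = (\<Sum>a<A. pol s a * g2 s a)" for s
  have "(\<integral>r. h (S0 r) (A0 r) (S1 r) \<partial>seed_space) = (\<integral>r. g2 (S0 r) (A0 r) \<partial>seed_space)"
    unfolding S1_def g2_def
  proof (rule integral_seed_smp)
    show "\<bar>h (S0 r) (A0 r) (smp (?P (S0 r) (A0 r)) S (r (j, 2)))\<bar> \<le>
        (\<Sum>(s, a, s')\<in>{..<S} \<times> {..<A} \<times> {..<S}. \<bar>h s a s'\<bar>)" for r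
      using abs_le_sum_abs[of "{..<S} \<times> {..<A} \<times> {..<S}" "(S0 r, A0 r, S1 r)" "\<lambda>(s, a, s'). h s a s'"] bounds
      by (simp add: S1_def case_prod_beta')
  qed (use m3[of h] in \<open>auto simp: S0_def A0_def S1_def intro: is_distr_hard_kernel[OF S e]\<close>)
  also have "\<dots> = (\<integral>r. g1 (S0 r) \<partial>seed_space)"
    unfolding A0_def g1_def
  proof (rule integral_seed_smp)
    show "\<bar>g2 (S0 r) (smp (pol (S0 r)) A (r (j, 1)))\<bar> \<le> (\<Sum>(s, a)\<in>{..<S} \<times> {..<A}. \<bar>g2 s a\<bar>)" for r
      using abs_le_sum_abs[of "{..<S} \<times> {..<A}" "(S0 r, A0 r)" "\<lambda>(s, a). g2 s a"] bounds
      by (simp add: A0_def case_prod_beta')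
  qed (use m3[of "\<lambda>s a _. g2 s a"] bounds(1) in \<open>auto simp: S0_def A0_def pol\<close>)
  also have "\<dots> = (\<integral>r. (\<Sum>s<S. d0 s * g1 s) \<partial>seed_space)"
    unfolding S0_def
  proof (rule integral_seed_smp[where G="\<lambda>_. g1"])
    show "\<bar>g1 (smp d0 S (r (j, 0)))\<bar> \<le> (\<Sum>s<S. \<bar>g1 s\<bar>)" for r :: "nat \<times> nat \<Rightarrow> real"
      using abs_le_sum_abs[of "{..<S}" "S0 r" g1] bounds by (simp add: S0_def)
  qed (use m3[of "\<lambda>s _ _. g1 s"] d0 in \<open>auto simp: S0_def\<close>)
  also have "\<dots> = (\<Sum>s0<S. \<Sum>a0<A. \<Sum>s1<S. d0 s0 * pol s0 a0 * ?P s0 a0 s1 * h s0 a0 s1)"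
    using seed.prob_space by (simp add: g1_def g2_def sum_distrib_left mult_ac)
  finally show ?thesis by (simp add: tr)
qed

section \<open>Likelihood ratios\<close>

text \<open>Off the support of \<open>Q\<close>, where no transition is ever sampled, the ratio is set to \<open>1\<close>.\<close>

definition kernel_ratio :: "kernel \<Rightarrow> kernel \<Rightarrow> nat \<Rightarrow> nat \<Rightarrow> nat \<Rightarrow> real" where
  "kernel_ratio P Q s0 a0 s1 = (if Q s0 a0 s1 = 0 then 1 else P s0 a0 s1 / Q s0 a0 s1)"

definition step_ratio :: "kernel \<Rightarrow> kernel \<Rightarrow> trajectory \<Rightarrow> real" where
  "step_ratio P Q tr = kernel_ratio P Q (fst (tr 0)) (snd (tr 0)) (fst (tr 1))"

lemma borel_measurable_step_ratio:
  fixes g :: "real \<Rightarrow> real"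
  assumes "\<And>t. (\<lambda>\<omega>. tr \<omega> t) \<in> measurable M (count_space UNIV)"
  shows "(\<lambda>\<omega>. g (step_ratio P Q (tr \<omega>))) \<in> borel_measurable M"
proof -
  have "(\<lambda>\<omega>. (tr \<omega> 0, tr \<omega> 1)) \<in> measurable M (count_space UNIV)"
    by (intro measurable_pair_count_space assms)
  from borel_measurable_count_space_comp[OF this, of "\<lambda>(x, y). g (kernel_ratio P Q (fst x) (snd x) (fst y))"]
  show ?thesis by (simp add: step_ratio_def)
qed

lemma kernel_ratio_hard_bounds:
  assumes "0 \<le> \<epsilon>" "\<epsilon> \<le> 1/4"
  shows "1/3 \<le> kernel_ratio (hard_kernel m \<epsilon> \<theta>) (hard_kernel m \<epsilon> \<theta>') s0 a0 s1 \<and>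
    kernel_ratio (hard_kernel m \<epsilon> \<theta>) (hard_kernel m \<epsilon> \<theta>') s0 a0 s1 \<le> 3"
proof -
  let ?p = "hard_kernel m \<epsilon> \<theta> s0 a0 s1" and ?q = "hard_kernel m \<epsilon> \<theta>' s0 a0 s1"
  have "?p = ?q \<or> (1/4 \<le> ?p \<and> ?p \<le> 3/4 \<and> 1/4 \<le> ?q \<and> ?q \<le> 3/4)"
    using assms by (auto simp: hard_kernel_def)
  then show ?thesis
    by (auto simp: kernel_ratio_def field_simps)
qed

lemma kernel_ratio_hard_pos:
  "0 \<le> \<epsilon> \<Longrightarrow> \<epsilon> \<le> 1/4 \<Longrightarrow> 0 < kernel_ratio (hard_kernel m \<epsilon> \<theta>) (hard_kernel m \<epsilon> \<theta>') s0 a0 s1"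
  using kernel_ratio_hard_bounds[of \<epsilon> m \<theta> \<theta>' s0 a0 s1] by linarith

lemma step_ratio_hard_bounds:
  "0 \<le> \<epsilon> \<Longrightarrow> \<epsilon> \<le> 1/4 \<Longrightarrow>
    0 < step_ratio (hard_kernel m \<epsilon> \<theta>) (hard_kernel m \<epsilon> \<theta>') tr \<and> step_ratio (hard_kernel m \<epsilon> \<theta>) (hard_kernel m \<epsilon> \<theta>') tr \<le> 3"
  unfolding step_ratio_def using kernel_ratio_hard_bounds kernel_ratio_hard_pos by blast

lemma abs_ln_kernel_ratio_hard:
  assumes "0 \<le> \<epsilon>" "\<epsilon> \<le> 1/4"
  shows "\<bar>ln (kernel_ratio (hard_kernel m \<epsilon> \<theta>) (hard_kernel m \<epsilon> \<theta>') s0 a0 s1)\<bar> \<le> 2"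
proof -
  let ?r = "kernel_ratio (hard_kernel m \<epsilon> \<theta>) (hard_kernel m \<epsilon> \<theta>') s0 a0 s1"
  have r: "1/3 \<le> ?r" "?r \<le> 3" using kernel_ratio_hard_bounds[OF assms] by auto
  have "ln ?r \<le> ?r - 1" "ln (1 / ?r) \<le> 1 / ?r - 1" using r by (intro ln_le_minus_one; simp)+
  moreover have "1 / ?r \<le> 3" "ln (1 / ?r) = - ln ?r" using r by (simp_all add: field_simps ln_div)
  ultimately show ?thesis using r by linarith
qed

lemma hard_kernel_mult_ratio:
  assumes "0 \<le> \<epsilon>" "\<epsilon> < 1/2"
  shows "hard_kernel m \<epsilon> \<theta>' s0 a0 s1 * kernel_ratio (hard_kernel m \<epsilon> \<theta>) (hard_kernel m \<epsilon> \<theta>') s0 a0 s1 =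
    hard_kernel m \<epsilon> \<theta> s0 a0 s1"
  using assms by (auto simp: kernel_ratio_def hard_kernel_def split: if_splits)

lemma integral_traj_change_kernel:
  assumes S: "2 \<le> S" and e: "0 \<le> \<epsilon>" "\<epsilon> \<le> 1/4"
    and FP: "(\<lambda>r. F (traj S A (hard_kernel m \<epsilon> \<theta>) d0 pol (\<lambda>t. r (j, t)))) \<in> borel_measurable seed_space"
    and FQ: "(\<lambda>r. F (traj S A (hard_kernel m \<epsilon> \<theta>') d0 pol (\<lambda>t. r (j, t)))) \<in> borel_measurable seed_space"
    and B: "\<And>tr. \<bar>F tr\<bar> \<le> B"
  shows "(\<integral>r. F (traj S A (hard_kernel m \<epsilon> \<theta>) d0 pol (\<lambda>t. r (j, t))) \<partial>seed_space) =
    (\<integral>r. F (traj S A (hard_kernel m \<epsilon> \<theta>') d0 pol (\<lambda>t. r (j, t))) *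
      step_ratio (hard_kernel m \<epsilon> \<theta>) (hard_kernel m \<epsilon> \<theta>') (traj S A (hard_kernel m \<epsilon> \<theta>') d0 pol (\<lambda>t. r (j, t))) \<partial>seed_space)"
proof -
  let ?P = "hard_kernel m \<epsilon> \<theta>" and ?Q = "hard_kernel m \<epsilon> \<theta>'"
  define s0 where "s0 r = smp d0 S (r (j, 0))" for r :: "nat \<times> nat \<Rightarrow> real"
  define a0 where "a0 r = smp (pol (s0 r)) A (r (j, 1))" for r
  define T where "T r = absorbed_traj S A pol (\<lambda>t. r (j, t)) (s0 r) (a0 r)" for r
  have traj: "traj S A (hard_kernel m \<epsilon> th) d0 pol (\<lambda>t. r (j, t)) =
      T r (smp (hard_kernel m \<epsilon> th (s0 r) (a0 r)) S (r (j, 2)))" for th r by (simp add: traj_hard_eq T_def s0_def a0_def)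
  have upd: "T (fun_upd r (j, 2) x) = T r" "s0 (fun_upd r (j, 2) x) = s0 r" "a0 (fun_upd r (j, 2) x) = a0 r" for r x
    unfolding T_def seed_row_fun_upd absorbed_traj_fun_upd by (simp_all add: s0_def a0_def)
  have distr: "is_distr S (hard_kernel m \<epsilon> th s a)" for th s a
    using is_distr_hard_kernel[OF S] e by simp
  have B3: "\<bar>F tr * step_ratio ?P ?Q tr\<bar> \<le> B * 3" for tr
    unfolding abs_mult using step_ratio_hard_bounds[OF e, of m \<theta> \<theta>' tr] B[of tr]
    by (intro mult_mono) (auto intro: order_trans[OF abs_ge_zero B])
  have "(\<integral>r. F (traj S A ?P d0 pol (\<lambda>t. r (j, t))) \<partial>seed_space) = (\<integral>r. (\<Sum>k<S. ?P (s0 r) (a0 r) k * F (T r k)) \<partial>seed_space)"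
    using FP B unfolding traj
    by (intro integral_seed_smp[where G="\<lambda>r k. F (T r k)"]) (auto simp: upd distr)
  also have "\<dots> = (\<integral>r. (\<Sum>k<S. ?Q (s0 r) (a0 r) k * (F (T r k) * step_ratio ?P ?Q (T r k))) \<partial>seed_space)"
  proof (intro Bochner_Integration.integral_cong refl sum.cong)
    fix r k
    have "?Q (s0 r) (a0 r) k * kernel_ratio ?P ?Q (s0 r) (a0 r) k = ?P (s0 r) (a0 r) k"
      by (rule hard_kernel_mult_ratio) (use e in auto)
    moreover have "step_ratio ?P ?Q (T r k) = kernel_ratio ?P ?Q (s0 r) (a0 r) k"
      by (simp add: step_ratio_def T_def absorbed_traj_first)
    ultimately show "?P (s0 r) (a0 r) k * F (T r k) = ?Q (s0 r) (a0 r) k * (F (T r k) * step_ratio ?P ?Q (T r k))"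
      by (simp add: mult_ac)
  qed
  also have "\<dots> = (\<integral>r. F (traj S A ?Q d0 pol (\<lambda>t. r (j, t))) *
      step_ratio ?P ?Q (traj S A ?Q d0 pol (\<lambda>t. r (j, t))) \<partial>seed_space)"
  proof -
    have "(\<lambda>r. F (traj S A ?Q d0 pol (\<lambda>t. r (j, t))) * step_ratio ?P ?Q (traj S A ?Q d0 pol (\<lambda>t. r (j, t))))
        \<in> borel_measurable seed_space"
    proof (rule borel_measurable_times[OF FQ])
      have "(\<lambda>r. traj S A ?Q d0 pol (\<lambda>t. r (j, t)) t) \<in> measurable seed_space (count_space UNIV)" for t
        by (intro measurable_traj) auto
      from borel_measurable_step_ratio[where g="\<lambda>x. x", OF this]
      show "(\<lambda>r. step_ratio ?P ?Q (traj S A ?Q d0 pol (\<lambda>t. r (j, t)))) \<in> borel_measurable seed_space" .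
    qed
    then show ?thesis unfolding traj using B3
      by (intro integral_seed_smp[where G="\<lambda>r k. F (T r k) * step_ratio ?P ?Q (T r k)", symmetric])
        (auto simp: upd distr)
  qed
  finally show ?thesis .
qed

section \<open>Change of measure over many episodes\<close>

text \<open>Histories are not a measurable space of their own; instead, \<open>hist_measurable K G\<close> asks
  that \<open>G\<close> turn every measurable history of \<open>K\<close> episodes built from the first \<open>K\<close> rows of seeds
  into a random variable. This is the invariant carried through the induction on episodes.\<close>

definition seeds_determined :: "nat \<Rightarrow> ((nat \<times> nat \<Rightarrow> real) \<Rightarrow> 'b) \<Rightarrow> bool" where
  "seeds_determined K f \<longleftrightarrow> (\<forall>\<omega> \<omega>'. \<omega> (0, 0) = \<omega>' (0, 0) \<longrightarrow>
     (\<forall>j t. 1 \<le> j \<longrightarrow> j \<le> K \<longrightarrow> \<omega> (j, t) = \<omega>' (j, t)) \<longrightarrow> f \<omega> = f \<omega>')"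

definition adapted ::
    "nat \<Rightarrow> ((nat \<times> nat \<Rightarrow> real) \<Rightarrow> real) \<Rightarrow> ((nat \<times> nat \<Rightarrow> real) \<Rightarrow> (policy \<times> trajectory) list) \<Rightarrow> bool" where
  "adapted K z h \<longleftrightarrow> z \<in> borel_measurable seed_space \<and> (\<forall>\<omega>. length (h \<omega>) = K) \<and>
     (\<forall>k<K. \<forall>s a. (\<lambda>\<omega>. fst (h \<omega> ! k) s a) \<in> borel_measurable seed_space) \<and>
     (\<forall>k<K. \<forall>t. (\<lambda>\<omega>. snd (h \<omega> ! k) t) \<in> measurable seed_space (count_space UNIV)) \<and>
     seeds_determined K z \<and> seeds_determined K h"

definition hist_measurable :: "nat \<Rightarrow> (real \<Rightarrow> (policy \<times> trajectory) list \<Rightarrow> real) \<Rightarrow> bool" where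
  "hist_measurable K G \<longleftrightarrow> (\<forall>z h. adapted K z h \<longrightarrow> (\<lambda>\<omega>. G (z \<omega>) (h \<omega>)) \<in> borel_measurable seed_space)"

definition extend_run :: "nat \<Rightarrow> nat \<Rightarrow> kernel \<Rightarrow> (nat \<Rightarrow> real) \<Rightarrow> loss \<Rightarrow> algorithm \<Rightarrow> nat \<Rightarrow>
    ((nat \<times> nat \<Rightarrow> real) \<Rightarrow> real) \<Rightarrow> ((nat \<times> nat \<Rightarrow> real) \<Rightarrow> (policy \<times> trajectory) list) \<Rightarrow>
    (nat \<times> nat \<Rightarrow> real) \<Rightarrow> (policy \<times> trajectory) list" where
  "extend_run S A P d0 l Alg K z h \<omega> = h \<omega> @ [(alg_policy Alg l K (z \<omega>) (h \<omega>),
      traj S A P d0 (alg_policy Alg l K (z \<omega>) (h \<omega>)) (\<lambda>t. \<omega> (Suc K, t)))]"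

lemma seeds_determined_Suc: "seeds_determined K f \<Longrightarrow> seeds_determined (Suc K) f"
  unfolding seeds_determined_def by (meson le_SucI)

lemma seeds_determined_merge_seed_row:
  assumes "seeds_determined K f"
  shows "f (merge_seeds (seed_row (Suc K)) \<omega> r) = f \<omega>"
proof -
  have "merge_seeds (seed_row (Suc K)) \<omega> r (0, 0) = \<omega> (0, 0)"
    "\<forall>j t. 1 \<le> j \<longrightarrow> j \<le> K \<longrightarrow> merge_seeds (seed_row (Suc K)) \<omega> r (j, t) = \<omega> (j, t)"
    by (auto simp: merge_seeds_def seed_row_def)
  then show ?thesis using assms unfolding seeds_determined_def by blast
qed

lemma adapted_const: "length h0 = K \<Longrightarrow> adapted K (\<lambda>_. z0) (\<lambda>_. h0)"
  unfolding adapted_def seeds_determined_def by auto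

lemma adapted_extend_run:
  assumes Alg: "valid_alg S A Alg" and zh: "adapted K z h"
  shows "adapted (Suc K) z (extend_run S A P d0 l Alg K z h)"
proof -
  have z: "z \<in> borel_measurable seed_space" and len: "\<And>\<omega>. length (h \<omega>) = K"
    and pol: "\<And>k s a. k < K \<Longrightarrow> (\<lambda>\<omega>. fst (h \<omega> ! k) s a) \<in> borel_measurable seed_space"
    and tr: "\<And>k t. k < K \<Longrightarrow> (\<lambda>\<omega>. snd (h \<omega> ! k) t) \<in> measurable seed_space (count_space UNIV)"
    and "seeds_determined K z" "seeds_determined K h"
    using zh unfolding adapted_def by auto
  then have det: "seeds_determined (Suc K) z" "seeds_determined (Suc K) h"
    by (simp_all add: seeds_determined_Suc)
  have new_pol: "(\<lambda>\<omega>. alg_policy Alg l K (z \<omega>) (h \<omega>) s a) \<in> borel_measurable seed_space" for s a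
    by (rule measurable_alg_policy[OF Alg z tr len])
  have new_traj: "(\<lambda>\<omega>. traj S A P d0 (alg_policy Alg l K (z \<omega>) (h \<omega>)) (\<lambda>t. \<omega> (Suc K, t)) t)
      \<in> measurable seed_space (count_space UNIV)" for t
    by (intro measurable_traj new_pol) simp
  have "seeds_determined (Suc K) (extend_run S A P d0 l Alg K z h)"
    unfolding seeds_determined_def
  proof (intro allI impI)
    fix \<omega> \<omega>' :: "nat \<times> nat \<Rightarrow> real"
    assume seeds: "\<omega> (0, 0) = \<omega>' (0, 0)" "\<forall>j t. 1 \<le> j \<longrightarrow> j \<le> Suc K \<longrightarrow> \<omega> (j, t) = \<omega>' (j, t)"
    then have "z \<omega> = z \<omega>'" "h \<omega> = h \<omega>'" using det unfolding seeds_determined_def by blast+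
    moreover have "(\<lambda>t. \<omega> (Suc K, t)) = (\<lambda>t. \<omega>' (Suc K, t))" using seeds by simp
    ultimately show "extend_run S A P d0 l Alg K z h \<omega> = extend_run S A P d0 l Alg K z h \<omega>'"
      by (simp add: extend_run_def)
  qed
  moreover have "(\<lambda>\<omega>. fst (extend_run S A P d0 l Alg K z h \<omega> ! k) s a) \<in> borel_measurable seed_space"
    if "k < Suc K" for k s a
  proof (cases "k < K")
    case False
    then have "k = K" using that by simp
    then show ?thesis using new_pol by (simp add: extend_run_def nth_append len)
  qed (use pol in \<open>simp add: extend_run_def nth_append len\<close>)
  moreover have "(\<lambda>\<omega>. snd (extend_run S A P d0 l Alg K z h \<omega> ! k) t) \<in> measurable seed_space (count_space UNIV)"
    if "k < Suc K" for k t
  proof (cases "k < K")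
    case False
    then have "k = K" using that by simp
    then show ?thesis using new_traj by (simp add: extend_run_def nth_append len)
  qed (use tr in \<open>simp add: extend_run_def nth_append len\<close>)
  ultimately show ?thesis
    unfolding adapted_def using z det by (simp add: extend_run_def len)
qed

lemma run_Suc_extend:
  "run S A P d0 l Alg (Suc K) = extend_run S A P d0 l Alg K (\<lambda>\<omega>. \<omega> (0, 0)) (run S A P d0 l Alg K)"
  by (rule ext) (simp only: extend_run_def run_Suc_eq)

lemma adapted_run: "valid_alg S A Alg \<Longrightarrow> adapted K (\<lambda>\<omega>. \<omega> (0, 0)) (run S A P d0 l Alg K)"
proof (induction K)
  case 0
  then show ?case by (simp add: adapted_def seeds_determined_def)
next
  case (Suc K)
  show ?case unfolding run_Suc_extend by (rule adapted_extend_run[OF Suc.prems Suc.IH[OF Suc.prems]])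
qed

lemma measurable_run:
  assumes "valid_alg S A Alg" "k < K"
  shows "(\<lambda>\<omega>. fst (run S A P d0 l Alg K \<omega> ! k) s a) \<in> borel_measurable seed_space"
    and "(\<lambda>\<omega>. snd (run S A P d0 l Alg K \<omega> ! k) t) \<in> measurable seed_space (count_space UNIV)"
  using adapted_run[OF assms(1), of K P d0 l] assms(2) unfolding adapted_def by auto

lemma hist_measurable_run:
  "valid_alg S A Alg \<Longrightarrow> hist_measurable K G \<Longrightarrow>
    (\<lambda>\<omega>. G (\<omega> (0, 0)) (run S A P d0 l Alg K \<omega>)) \<in> borel_measurable seed_space"
  using adapted_run unfolding hist_measurable_def by blast

lemma hist_measurable_cong:
  assumes "\<And>z h. length h = K \<Longrightarrow> G z h = G' z h" "hist_measurable K G"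
  shows "hist_measurable K G'"
  unfolding hist_measurable_def
proof (intro allI impI)
  fix z h assume "adapted K z h"
  then have "(\<lambda>\<omega>. G' (z \<omega>) (h \<omega>)) = (\<lambda>\<omega>. G (z \<omega>) (h \<omega>))" using assms(1) by (simp add: adapted_def)
  then show "(\<lambda>\<omega>. G' (z \<omega>) (h \<omega>)) \<in> borel_measurable seed_space"
    using assms(2) \<open>adapted K z h\<close> unfolding hist_measurable_def by simp
qed

lemma hist_measurable_mult:
  assumes "hist_measurable K G" "hist_measurable K H"
  shows "hist_measurable K (\<lambda>z h. G z h * H z h)"
  unfolding hist_measurable_def
proof (intro allI impI)
  fix z h assume "adapted K z h"
  with assms show "(\<lambda>\<omega>. G (z \<omega>) (h \<omega>) * H (z \<omega>) (h \<omega>)) \<in> borel_measurable seed_space"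
    unfolding hist_measurable_def by (intro borel_measurable_times) blast+
qed

lemma hist_measurable_sum:
  assumes "\<And>i. i \<in> I \<Longrightarrow> hist_measurable K (G i)"
  shows "hist_measurable K (\<lambda>z h. \<Sum>i\<in>I. G i z h)"
  unfolding hist_measurable_def
proof (intro allI impI)
  fix z h assume "adapted K z h"
  with assms show "(\<lambda>\<omega>. \<Sum>i\<in>I. G i (z \<omega>) (h \<omega>)) \<in> borel_measurable seed_space"
    unfolding hist_measurable_def by (intro borel_measurable_sum) blast
qed

lemma hist_measurable_policy:
  assumes "g \<in> borel_measurable borel" "k < K"
  shows "hist_measurable K (\<lambda>z h. g (fst (h ! k) s a))"
  unfolding hist_measurable_def adapted_def using assms(2) by (auto intro!: measurable_compose[OF _ assms(1)])

lemma hist_measurable_step_ratio: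
  "k < K \<Longrightarrow> hist_measurable K (\<lambda>z h. g (step_ratio P Q (snd (h ! k))))"
  unfolding hist_measurable_def adapted_def by (auto intro: borel_measurable_step_ratio)

lemma hist_measurable_integral_snoc:
  assumes Alg: "valid_alg S A Alg" and H: "hist_measurable (Suc K) H"
  shows "hist_measurable K (\<lambda>z h. \<integral>r. H z (h @ [(alg_policy Alg l K z h,
    traj S A P d0 (alg_policy Alg l K z h) (\<lambda>t. r (Suc K, t)))]) \<partial>seed_space)"
  unfolding hist_measurable_def
proof (intro allI impI)
  fix z h assume zh: "adapted K z h"
  then have det: "seeds_determined K z" "seeds_determined K h" by (simp_all add: adapted_def)
  define \<Phi> where "\<Phi> \<omega> = H (z \<omega>) (extend_run S A P d0 l Alg K z h \<omega>)" for \<omega>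
  have "\<Phi> \<in> borel_measurable seed_space"
    using H adapted_extend_run[OF Alg zh] unfolding hist_measurable_def \<Phi>_def by blast
  then have "(\<lambda>(\<omega>, r). \<Phi> (merge_seeds (seed_row (Suc K)) \<omega> r)) \<in> borel_measurable (seed_space \<Otimes>\<^sub>M seed_space)"
    using measurable_compose[OF measurable_merge_seeds] by (simp add: case_prod_beta')
  then have "(\<lambda>\<omega>. \<integral>r. \<Phi> (merge_seeds (seed_row (Suc K)) \<omega> r) \<partial>seed_space) \<in> borel_measurable seed_space"
    by (rule seed.borel_measurable_lebesgue_integral)
  moreover have "\<Phi> (merge_seeds (seed_row (Suc K)) \<omega> r) = H (z \<omega>) (h \<omega> @ [(alg_policy Alg l K (z \<omega>) (h \<omega>),
      traj S A P d0 (alg_policy Alg l K (z \<omega>) (h \<omega>)) (\<lambda>t. r (Suc K, t)))])" for \<omega> r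
    by (simp add: \<Phi>_def extend_run_def seeds_determined_merge_seed_row[OF det(1)]
        seeds_determined_merge_seed_row[OF det(2)] merge_seed_row_row)
  ultimately show "(\<lambda>\<omega>. \<integral>r. H (z \<omega>) (h \<omega> @ [(alg_policy Alg l K (z \<omega>) (h \<omega>),
      traj S A P d0 (alg_policy Alg l K (z \<omega>) (h \<omega>)) (\<lambda>t. r (Suc K, t)))]) \<partial>seed_space) \<in> borel_measurable seed_space"
    by simp
qed

lemma hist_measurable_snoc_traj:
  assumes Alg: "valid_alg S A Alg" and H: "hist_measurable (Suc K) H" and h0: "length h0 = K"
  shows "(\<lambda>r. H z0 (h0 @ [(alg_policy Alg l K z0 h0, traj S A P d0 (alg_policy Alg l K z0 h0) (\<lambda>t. r (Suc K, t)))]))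
    \<in> borel_measurable seed_space"
proof -
  have "adapted (Suc K) (\<lambda>_. z0) (extend_run S A P d0 l Alg K (\<lambda>_. z0) (\<lambda>_. h0))"
    by (rule adapted_extend_run[OF Alg adapted_const[OF h0]])
  then show ?thesis using H unfolding hist_measurable_def extend_run_def by blast
qed

text \<open>The last episode is driven by a fresh row of seeds.\<close>

lemma integral_run_Suc:
  assumes Alg: "valid_alg S A Alg" and G: "hist_measurable (Suc K) G"
    and B: "\<And>\<omega>. \<bar>G (\<omega> (0, 0)) (run S A P d0 l Alg (Suc K) \<omega>)\<bar> \<le> B"
  shows "(\<integral>\<omega>. G (\<omega> (0, 0)) (run S A P d0 l Alg (Suc K) \<omega>) \<partial>seed_space) =
    (\<integral>\<omega>. (\<integral>r. G (\<omega> (0, 0)) (run S A P d0 l Alg K \<omega> @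
        [(alg_policy Alg l K (\<omega> (0, 0)) (run S A P d0 l Alg K \<omega>),
          traj S A P d0 (alg_policy Alg l K (\<omega> (0, 0)) (run S A P d0 l Alg K \<omega>)) (\<lambda>t. r (Suc K, t)))])
      \<partial>seed_space) \<partial>seed_space)"
  using integral_merge_seeds[OF hist_measurable_run[OF Alg G] B, of "seed_row (Suc K)"]
  by (simp only: run_Suc_eq merge_seed_row_alg_seed run_merge_seed_row merge_seed_row_row)

definition lik_ratio :: "kernel \<Rightarrow> kernel \<Rightarrow> (policy \<times> trajectory) list \<Rightarrow> real" where
  "lik_ratio P Q h = (\<Prod>x\<leftarrow>h. step_ratio P Q (snd x))"

lemma lik_ratio_snoc: "lik_ratio P Q (h @ [x]) = lik_ratio P Q h * step_ratio P Q (snd x)"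
  by (simp add: lik_ratio_def)

lemma lik_ratio_prod: "lik_ratio P Q h = (\<Prod>k<length h. step_ratio P Q (snd (h ! k)))"
  unfolding lik_ratio_def by (simp add: prod.list_conv_set_nth atLeast0LessThan)

lemma hist_measurable_lik_ratio: "hist_measurable K (\<lambda>z h. lik_ratio P Q h)"
  unfolding hist_measurable_def
proof (intro allI impI)
  fix z h assume "adapted K z h"
  then have "length (h \<omega>) = K" "(\<lambda>\<omega>. step_ratio P Q (snd (h \<omega> ! k))) \<in> borel_measurable seed_space"
    if "k < K" for \<omega> k
    using that unfolding adapted_def by (auto intro: borel_measurable_step_ratio[where g="\<lambda>x. x"])
  then show "(\<lambda>\<omega>. lik_ratio P Q (h \<omega>)) \<in> borel_measurable seed_space"
    unfolding lik_ratio_prod by (auto simp: \<open>adapted K z h\<close>[unfolded adapted_def] intro!: borel_measurable_prod)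
qed

lemma lik_ratio_hard_bounds:
  assumes "0 \<le> \<epsilon>" "\<epsilon> \<le> 1/4"
  shows "0 < lik_ratio (hard_kernel m \<epsilon> \<theta>) (hard_kernel m \<epsilon> \<theta>') h \<and>
    lik_ratio (hard_kernel m \<epsilon> \<theta>) (hard_kernel m \<epsilon> \<theta>') h \<le> 3 ^ length h"
proof (induction h rule: rev_induct)
  case (snoc x h)
  note step_ratio_hard_bounds[OF assms, of m \<theta> \<theta>' "snd x"]
  moreover have "lik_ratio (hard_kernel m \<epsilon> \<theta>) (hard_kernel m \<epsilon> \<theta>') h * 3 \<le> 3 ^ length h * 3"
    using snoc by simp
  ultimately show ?case using snoc unfolding lik_ratio_snoc
    by (simp add: mult_left_mono order_trans[OF mult_left_mono[of _ 3]])
qed (simp add: lik_ratio_def)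

lemma integral_snoc_change_kernel:
  assumes Alg: "valid_alg S A Alg" and S: "2 \<le> S" and e: "0 \<le> \<epsilon>" "\<epsilon> \<le> 1/4"
    and G: "hist_measurable (Suc K) G" "\<And>z h. \<bar>G z h\<bar> \<le> B" and h: "length h = K"
  shows "(\<integral>r. G z (h @ [(alg_policy Alg l K z h,
      traj S A (hard_kernel m \<epsilon> \<theta>) d0 (alg_policy Alg l K z h) (\<lambda>t. r (Suc K, t)))]) \<partial>seed_space) =
    (\<integral>r. G z (h @ [(alg_policy Alg l K z h,
      traj S A (hard_kernel m \<epsilon> \<theta>') d0 (alg_policy Alg l K z h) (\<lambda>t. r (Suc K, t)))]) *
      step_ratio (hard_kernel m \<epsilon> \<theta>) (hard_kernel m \<epsilon> \<theta>')
        (traj S A (hard_kernel m \<epsilon> \<theta>') d0 (alg_policy Alg l K z h) (\<lambda>t. r (Suc K, t))) \<partial>seed_space)"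
  using integral_traj_change_kernel[where F="\<lambda>tr. G z (h @ [(alg_policy Alg l K z h, tr)])", OF S e
      hist_measurable_snoc_traj[OF Alg G(1) h] hist_measurable_snoc_traj[OF Alg G(1) h] G(2)] .

lemma change_of_measure:
  assumes Alg: "valid_alg S A Alg" and S: "2 \<le> S" and e: "0 \<le> \<epsilon>" "\<epsilon> \<le> 1/4"
  shows "hist_measurable K G \<Longrightarrow> (\<And>z h. \<bar>G z h\<bar> \<le> B) \<Longrightarrow>
    (\<integral>\<omega>. G (\<omega> (0, 0)) (run S A (hard_kernel m \<epsilon> \<theta>) d0 l Alg K \<omega>) \<partial>seed_space) =
    (\<integral>\<omega>. G (\<omega> (0, 0)) (run S A (hard_kernel m \<epsilon> \<theta>') d0 l Alg K \<omega>) *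
       lik_ratio (hard_kernel m \<epsilon> \<theta>) (hard_kernel m \<epsilon> \<theta>') (run S A (hard_kernel m \<epsilon> \<theta>') d0 l Alg K \<omega>) \<partial>seed_space)"
proof (induction K arbitrary: G B)
  case 0
  then show ?case by (simp add: lik_ratio_def)
next
  case (Suc K)
  let ?P = "hard_kernel m \<epsilon> \<theta>" and ?Q = "hard_kernel m \<epsilon> \<theta>'"
  let ?R = "\<lambda>X. run S A X d0 l Alg K" and ?\<pi> = "\<lambda>z h. alg_policy Alg l K z h"
  let ?snoc = "\<lambda>X z h r. h @ [(?\<pi> z h, traj S A X d0 (?\<pi> z h) (\<lambda>t. r (Suc K, t)))]"
  define G' where "G' z h = (\<integral>r. G z (?snoc ?Q z h r) *
      step_ratio ?P ?Q (traj S A ?Q d0 (?\<pi> z h) (\<lambda>t. r (Suc K, t))) \<partial>seed_space)" for z h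
  have B0: "0 \<le> B" using Suc.prems(2) by (meson abs_ge_zero order_trans)
  have GW_bound: "\<bar>G z h * step_ratio ?P ?Q tr\<bar> \<le> B * 3" for z h tr
    unfolding abs_mult using step_ratio_hard_bounds[OF e, of m \<theta> \<theta>' tr] Suc.prems(2)[of z h] B0
    by (intro mult_mono) auto
  have "hist_measurable (Suc K) (\<lambda>z h. G z h * step_ratio ?P ?Q (snd (h ! K)))"
    by (intro hist_measurable_mult Suc.prems(1) hist_measurable_step_ratio) simp
  then have "hist_measurable K (\<lambda>z h. \<integral>r. G z (?snoc ?Q z h r) * step_ratio ?P ?Q (snd (?snoc ?Q z h r ! K)) \<partial>seed_space)"
    by (rule hist_measurable_integral_snoc[OF Alg])
  then have G': "hist_measurable K G'"
    by (rule hist_measurable_cong[rotated]) (simp add: G'_def nth_append)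
  have "(\<integral>\<omega>. G (\<omega> (0, 0)) (run S A ?P d0 l Alg (Suc K) \<omega>) \<partial>seed_space) =
      (\<integral>\<omega>. (\<integral>r. G (\<omega> (0, 0)) (?snoc ?P (\<omega> (0, 0)) (?R ?P \<omega>) r) \<partial>seed_space) \<partial>seed_space)"
    by (rule integral_run_Suc[OF Alg Suc.prems(1) Suc.prems(2)])
  also have "\<dots> = (\<integral>\<omega>. G' (\<omega> (0, 0)) (?R ?P \<omega>) \<partial>seed_space)"
    unfolding G'_def by (intro Bochner_Integration.integral_cong refl integral_snoc_change_kernel[OF Alg S e Suc.prems]) simp
  also have "\<dots> = (\<integral>\<omega>. G' (\<omega> (0, 0)) (?R ?Q \<omega>) * lik_ratio ?P ?Q (?R ?Q \<omega>) \<partial>seed_space)"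
    by (rule Suc.IH[OF G', of "B * 3"]) (auto simp: G'_def intro: seed.abs_integral_le_bound GW_bound)
  also have "\<dots> = (\<integral>\<omega>. (\<integral>r. G (\<omega> (0, 0)) (?snoc ?Q (\<omega> (0, 0)) (?R ?Q \<omega>) r) *
      lik_ratio ?P ?Q (?snoc ?Q (\<omega> (0, 0)) (?R ?Q \<omega>) r) \<partial>seed_space) \<partial>seed_space)"
    by (simp add: G'_def lik_ratio_snoc mult_ac)
  also have "\<dots> = (\<integral>\<omega>. G (\<omega> (0, 0)) (run S A ?Q d0 l Alg (Suc K) \<omega>) *
      lik_ratio ?P ?Q (run S A ?Q d0 l Alg (Suc K) \<omega>) \<partial>seed_space)"
  proof (rule integral_run_Suc[OF Alg, symmetric])
    show "hist_measurable (Suc K) (\<lambda>z h. G z h * lik_ratio ?P ?Q h)"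
      by (intro hist_measurable_mult Suc.prems(1) hist_measurable_lik_ratio)
    show "\<bar>G (\<omega> (0, 0)) (run S A ?Q d0 l Alg (Suc K) \<omega>) * lik_ratio ?P ?Q (run S A ?Q d0 l Alg (Suc K) \<omega>)\<bar>
        \<le> B * 3 ^ Suc K" for \<omega>
      using lik_ratio_hard_bounds[OF e, of m \<theta> \<theta>' "run S A ?Q d0 l Alg (Suc K) \<omega>"] Suc.prems(2) B0
      unfolding abs_mult by (intro mult_mono) (auto simp del: run.simps)
  qed
  finally show ?case .
qed

section \<open>A pointwise Pinsker inequality\<close>

lemma ln_Pade_bounds:
  fixes x :: real
  assumes x: "0 < x"
  shows "x \<le> 1 \<Longrightarrow> (x + 1) * ln x \<le> 2 * (x - 1)" and "1 \<le> x \<Longrightarrow> 2 * (x - 1) \<le> (x + 1) * ln x"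
proof -
  let ?h = "\<lambda>y::real. (y + 1) * ln y - 2 * (y - 1)"
  have deriv: "\<exists>D. DERIV ?h y :> D \<and> 0 \<le> D" if "0 < y" for y :: real
  proof (intro exI conjI)
    show "DERIV ?h y :> ln y + (y + 1) / y - 2"
      using that by (auto intro!: derivative_eq_intros simp: field_simps)
    have "ln (1 / y) \<le> 1 / y - 1" using ln_le_minus_one[of "1 / y"] that by simp
    then show "0 \<le> ln y + (y + 1) / y - 2" using that by (simp add: ln_div field_simps)
  qed
  show "x \<le> 1 \<Longrightarrow> (x + 1) * ln x \<le> 2 * (x - 1)"
    using DERIV_nonneg_imp_nondecreasing[of x 1 ?h] deriv x by force
  show "1 \<le> x \<Longrightarrow> 2 * (x - 1) \<le> (x + 1) * ln x"
    using DERIV_nonneg_imp_nondecreasing[of 1 x ?h] deriv by force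
qed

text \<open>The pointwise inequality behind Pinsker's inequality.\<close>

lemma pinsker_pointwise:
  fixes x :: real
  assumes x: "0 < x"
  shows "3 * (x - 1)\<^sup>2 \<le> (2 * x + 4) * (x * ln x - x + 1)"
proof -
  let ?g = "\<lambda>y::real. (2 * y + 4) * (y * ln y - y + 1) - 3 * (y - 1)\<^sup>2"
  have deriv: "DERIV ?g y :> 4 * ((y + 1) * ln y - 2 * (y - 1))" if "0 < y" for y :: real
    using that by (auto intro!: derivative_eq_intros simp: field_simps power2_eq_square)
  have "?g 1 \<le> ?g x"
  proof (cases "x \<le> 1")
    case True
    show ?thesis
    proof (rule DERIV_nonpos_imp_nonincreasing[OF True])
      fix y assume "x \<le> y" "y \<le> 1"
      then show "\<exists>D. DERIV ?g y :> D \<and> D \<le> 0"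
        using deriv[of y] ln_Pade_bounds(1)[of y] x by auto
    qed
  next
    case False
    show ?thesis
    proof (rule DERIV_nonneg_imp_nondecreasing[of 1 x])
      fix y assume "1 \<le> y" "y \<le> x"
      then show "\<exists>D. DERIV ?g y :> D \<and> 0 \<le> D"
        using deriv[of y] ln_Pade_bounds(2)[of y] by auto
    qed (use False in simp)
  qed
  then show ?thesis by simp
qed

lemma pinsker_pointwise_amgm:
  fixes x t :: real
  assumes x: "0 < x" and t: "0 < t"
  shows "\<bar>x - 1\<bar> \<le> (t * ((2 * x + 4) / 3) + (x * ln x - x + 1) / t) / 2"
proof -
  let ?a = "(2 * x + 4) / 3" and ?b = "x * ln x - x + 1"
  have ab: "(x - 1)\<^sup>2 \<le> ?a * ?b" using pinsker_pointwise[OF x] by simp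
  have a: "0 < ?a" using x by simp
  then have b: "0 \<le> ?b" using ab by (meson order_trans zero_le_power2 zero_le_mult_iff not_less)
  have "((t * ?a + ?b / t) / 2)\<^sup>2 - ?a * ?b = ((t * ?a - ?b / t) / 2)\<^sup>2"
    using t by (simp add: power2_eq_square field_simps)
  then have "?a * ?b \<le> ((t * ?a + ?b / t) / 2)\<^sup>2" by (metis diff_ge_0_iff_ge zero_le_power2)
  then have "\<bar>x - 1\<bar>\<^sup>2 \<le> ((t * ?a + ?b / t) / 2)\<^sup>2" using ab by (simp add: power2_abs)
  moreover have "0 \<le> (t * ?a + ?b / t) / 2" using a b t by simp
  ultimately show ?thesis by (meson abs_ge_zero power2_le_imp_le)
qed

section \<open>Information about a single initial state\<close>

text \<open>In the reference instance \<open>\<theta>0(s := A)\<close> no action is good at \<open>s\<close>,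
  in \<open>\<theta>0(s := a)\<close> the action \<open>a\<close> is; the two kernels differ only in the transition out of
  \<open>(s, a)\<close>, and \<open>kl_hard\<close> is the Kullback-Leibler divergence between them there.\<close>

definition kl_hard :: "nat \<Rightarrow> nat \<Rightarrow> real \<Rightarrow> (nat \<Rightarrow> nat) \<Rightarrow> nat \<Rightarrow> nat \<Rightarrow> nat \<Rightarrow> real" where
  "kl_hard S A \<epsilon> \<theta>0 m s a = (\<Sum>s1<S. hard_kernel m \<epsilon> (\<theta>0(s := A)) s a s1 *
     ln (kernel_ratio (hard_kernel m \<epsilon> (\<theta>0(s := A))) (hard_kernel m \<epsilon> (\<theta>0(s := a))) s a s1))"

lemma kernel_ratio_hard_other:
  assumes "\<not> (s0 = s \<and> a0 = a)" "a0 < A"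
  shows "kernel_ratio (hard_kernel m \<epsilon> (\<theta>0(s := A))) (hard_kernel m \<epsilon> (\<theta>0(s := a))) s0 a0 s1 = 1"
proof -
  have "hard_kernel m \<epsilon> (\<theta>0(s := A)) s0 a0 s1 = hard_kernel m \<epsilon> (\<theta>0(s := a)) s0 a0 s1"
    using assms by (auto simp: hard_kernel_def)
  then show ?thesis by (simp add: kernel_ratio_def)
qed

lemma sum_log_kernel_ratio_hard:
  assumes s: "s < S" and a: "a < A"
  shows "(\<Sum>s0<S. \<Sum>a0<A. \<Sum>s1<S. d0 s0 * pol s0 a0 * hard_kernel m \<epsilon> (\<theta>0(s := A)) s0 a0 s1 *
      ln (kernel_ratio (hard_kernel m \<epsilon> (\<theta>0(s := A))) (hard_kernel m \<epsilon> (\<theta>0(s := a))) s0 a0 s1)) =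
    d0 s * pol s a * kl_hard S A \<epsilon> \<theta>0 m s a"
proof -
  let ?F = "\<lambda>s0 a0. \<Sum>s1<S. d0 s0 * pol s0 a0 * hard_kernel m \<epsilon> (\<theta>0(s := A)) s0 a0 s1 *
      ln (kernel_ratio (hard_kernel m \<epsilon> (\<theta>0(s := A))) (hard_kernel m \<epsilon> (\<theta>0(s := a))) s0 a0 s1)"
  have "(\<Sum>s0<S. \<Sum>a0<A. ?F s0 a0) = (\<Sum>s0<S. \<Sum>a0<A. if s0 = s \<and> a0 = a then ?F s a else 0)"
    by (intro sum.cong refl) (auto simp: kernel_ratio_hard_other)
  also have "\<dots> = ?F s a"
  proof -
    have "(\<Sum>a0<A. if s0 = s \<and> a0 = a then c else 0) = (if s0 = s then c else 0)" for s0 and c :: real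
      using a by (cases "s0 = s") (simp_all add: sum.delta)
    then show ?thesis using s by (simp add: sum.delta)
  qed
  also have "\<dots> = d0 s * pol s a * kl_hard S A \<epsilon> \<theta>0 m s a"
    by (simp add: kl_hard_def sum_distrib_left mult_ac)
  finally show ?thesis .
qed

lemma kl_hard_le:
  assumes e: "0 \<le> \<epsilon>" "\<epsilon> \<le> 1/4" and s: "2 \<le> s" "s < m + 2" and a: "a < A" and S: "2 \<le> S"
  shows "kl_hard S A \<epsilon> \<theta>0 m s a \<le> 6 * \<epsilon>\<^sup>2"
proof -
  let ?Q = "hard_kernel m \<epsilon> (\<theta>0(s := A))" and ?P = "hard_kernel m \<epsilon> (\<theta>0(s := a))"
  have "kl_hard S A \<epsilon> \<theta>0 m s a = (\<Sum>s1<2. ?Q s a s1 * ln (kernel_ratio ?Q ?P s a s1))"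
    unfolding kl_hard_def using S s by (intro sum.mono_neutral_right) (auto simp: hard_kernel_def)
  also have "\<dots> = 1/2 * ln (1/2 / (1/2 + \<epsilon>)) + 1/2 * ln (1/2 / (1/2 - \<epsilon>))"
    using s a e by (simp add: numeral_2_eq_2 lessThan_Suc hard_kernel_def kernel_ratio_def)
  also have "\<dots> \<le> 1/2 * (1/2 / (1/2 + \<epsilon>) - 1) + 1/2 * (1/2 / (1/2 - \<epsilon>) - 1)"
    using e by (intro add_mono mult_left_mono ln_le_minus_one) auto
  also have "\<dots> = 4 * \<epsilon>\<^sup>2 / (1 - 4 * \<epsilon>\<^sup>2)"
    using e by (simp add: field_simps power2_eq_square)
  also have "\<dots> \<le> 6 * \<epsilon>\<^sup>2"
  proof -
    have "\<epsilon>\<^sup>2 \<le> (1/4)\<^sup>2" using e by (intro power_mono) auto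
    then have "2/3 \<le> 1 - 4 * \<epsilon>\<^sup>2" by (simp add: power2_eq_square)
    then have "4 * \<epsilon>\<^sup>2 \<le> 6 * \<epsilon>\<^sup>2 * (1 - 4 * \<epsilon>\<^sup>2)"
      using mult_left_mono[of "2/3" "1 - 4 * \<epsilon>\<^sup>2" "6 * \<epsilon>\<^sup>2"] by simp
    then show ?thesis using \<open>2/3 \<le> 1 - 4 * \<epsilon>\<^sup>2\<close> by (simp add: pos_divide_le_eq)
  qed
  finally show ?thesis .
qed

text \<open>Only episodes that start in \<open>s\<close> and play \<open>a\<close> there carry information, so the expected
  log-likelihood ratio of an episode is \<open>1/m\<close> times the probability of playing \<open>a\<close> at \<open>s\<close>, times
  \<open>kl_hard\<close>.\<close>

lemma integral_log_step_ratio: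
  fixes \<theta>0 :: "nat \<Rightarrow> nat"
  assumes Alg: "valid_alg S A Alg" and S: "m + 2 \<le> S" and m: "1 \<le> m" and A: "0 < A"
    and e: "0 \<le> \<epsilon>" "\<epsilon> \<le> 1/4" and s: "2 \<le> s" "s < m + 2" and a: "a < A" and k: "k < K"
  shows "(\<integral>\<omega>. ln (step_ratio (hard_kernel m \<epsilon> (\<theta>0(s := A))) (hard_kernel m \<epsilon> (\<theta>0(s := a)))
        (snd (run S A (hard_kernel m \<epsilon> (\<theta>0(s := A))) (hard_init m) hard_loss Alg K \<omega> ! k))) \<partial>seed_space) =
    (\<integral>\<omega>. fst (run S A (hard_kernel m \<epsilon> (\<theta>0(s := A))) (hard_init m) hard_loss Alg K \<omega> ! k) s a *
        kl_hard S A \<epsilon> \<theta>0 m s a / m \<partial>seed_space)"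
proof -
  let ?Q = "hard_kernel m \<epsilon> (\<theta>0(s := A))" and ?P = "hard_kernel m \<epsilon> (\<theta>0(s := a))"
  let ?R = "\<lambda>K. run S A ?Q (hard_init m) hard_loss Alg K"
  let ?\<pi> = "\<lambda>\<omega>. alg_policy Alg hard_loss k (\<omega> (0, 0)) (?R k \<omega>)"
  have G: "hist_measurable (Suc k) (\<lambda>z h. ln (step_ratio ?Q ?P (snd (h ! k))))"
    by (rule hist_measurable_step_ratio) simp
  have B: "\<bar>ln (step_ratio ?Q ?P tr)\<bar> \<le> 2" for tr
    unfolding step_ratio_def by (rule abs_ln_kernel_ratio_hard[OF e])
  have first: "(\<integral>r. ln (step_ratio ?Q ?P (traj S A ?Q (hard_init m) (?\<pi> \<omega>) (\<lambda>t. r (Suc k, t)))) \<partial>seed_space) =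
      ?\<pi> \<omega> s a * kl_hard S A \<epsilon> \<theta>0 m s a / m" for \<omega>
  proof -
    have "is_distr A (?\<pi> \<omega> s')" if "s' < S" for s'
      using Alg that by (simp add: alg_policy_def valid_alg_def stoch_policy_def)
    then have "(\<integral>r. ln (step_ratio ?Q ?P (traj S A ?Q (hard_init m) (?\<pi> \<omega>) (\<lambda>t. r (Suc k, t)))) \<partial>seed_space) =
        (\<Sum>s0<S. \<Sum>a0<A. \<Sum>s1<S. hard_init m s0 * ?\<pi> \<omega> s0 a0 * ?Q s0 a0 s1 * ln (kernel_ratio ?Q ?P s0 a0 s1))"
      using integral_first_transition[of S A \<epsilon> "hard_init m" "?\<pi> \<omega>" "\<lambda>s0 a0 s1. ln (kernel_ratio ?Q ?P s0 a0 s1)"]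
        S m A e is_distr_hard_init[OF m S] unfolding step_ratio_def by simp
    also have "\<dots> = hard_init m s * ?\<pi> \<omega> s a * kl_hard S A \<epsilon> \<theta>0 m s a"
      using S s a by (intro sum_log_kernel_ratio_hard) auto
    finally show ?thesis using s by (simp add: hard_init_def)
  qed
  have "(\<integral>\<omega>. ln (step_ratio ?Q ?P (snd (?R K \<omega> ! k))) \<partial>seed_space) =
      (\<integral>\<omega>. ln (step_ratio ?Q ?P (snd (?R (Suc k) \<omega> ! k))) \<partial>seed_space)"
    by (simp only: run_nth_prefix[OF k])
  also have "\<dots> = (\<integral>\<omega>. (\<integral>r. ln (step_ratio ?Q ?P (snd ((?R k \<omega> @
      [(?\<pi> \<omega>, traj S A ?Q (hard_init m) (?\<pi> \<omega>) (\<lambda>t. r (Suc k, t)))]) ! k))) \<partial>seed_space) \<partial>seed_space)"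
    by (rule integral_run_Suc[OF Alg G]) (rule B)
  also have "\<dots> = (\<integral>\<omega>. (\<integral>r. ln (step_ratio ?Q ?P (traj S A ?Q (hard_init m) (?\<pi> \<omega>) (\<lambda>t. r (Suc k, t)))) \<partial>seed_space) \<partial>seed_space)"
    by (simp add: nth_append)
  also have "\<dots> = (\<integral>\<omega>. fst (?R K \<omega> ! k) s a * kl_hard S A \<epsilon> \<theta>0 m s a / m \<partial>seed_space)"
    by (simp only: first fst_run_nth[OF k])
  finally show ?thesis .
qed

text \<open>The clipping to \<open>[0, 1]\<close> only matters for histories that no valid learner produces; it
  makes \<open>visits\<close> bounded.\<close>

definition visits :: "nat \<Rightarrow> nat \<Rightarrow> nat \<Rightarrow> (policy \<times> trajectory) list \<Rightarrow> real" where
  "visits K s a h = (\<Sum>k<K. max 0 (min 1 (fst (h ! k) s a)))"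

definition log_lik_ratio :: "nat \<Rightarrow> kernel \<Rightarrow> kernel \<Rightarrow> (policy \<times> trajectory) list \<Rightarrow> real" where
  "log_lik_ratio K P Q h = (\<Sum>k<K. ln (step_ratio P Q (snd (h ! k))))"

lemma visits_run:
  assumes "valid_alg S A Alg" "s < S" "a < A"
  shows "visits K s a (run S A P d0 l Alg K \<omega>) = (\<Sum>k<K. fst (run S A P d0 l Alg K \<omega> ! k) s a)"
  unfolding visits_def using stoch_policy_bounds[OF stoch_policy_run[OF assms(1)] assms(2,3)]
  by (intro sum.cong refl) simp

lemma visits_bounds: "0 \<le> visits K s a h \<and> visits K s a h \<le> K"
proof -
  have "visits K s a h \<le> (\<Sum>k<K. 1)" unfolding visits_def by (intro sum_mono) simp
  moreover have "0 \<le> visits K s a h" unfolding visits_def by (intro sum_nonneg) simp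
  ultimately show ?thesis by simp
qed

lemma hist_measurable_visits: "hist_measurable K (\<lambda>z h. visits K s a h)"
  unfolding visits_def by (intro hist_measurable_sum hist_measurable_policy) auto

lemma hist_measurable_log_lik_ratio: "hist_measurable K (\<lambda>z h. log_lik_ratio K P Q h)"
  unfolding log_lik_ratio_def by (intro hist_measurable_sum hist_measurable_step_ratio) simp

lemma abs_log_lik_ratio_hard:
  assumes "0 \<le> \<epsilon>" "\<epsilon> \<le> 1/4"
  shows "\<bar>log_lik_ratio K (hard_kernel m \<epsilon> \<theta>) (hard_kernel m \<epsilon> \<theta>') h\<bar> \<le> 2 * real K"
proof -
  have "\<bar>log_lik_ratio K (hard_kernel m \<epsilon> \<theta>) (hard_kernel m \<epsilon> \<theta>') h\<bar> \<le>
      (\<Sum>k<K. \<bar>ln (step_ratio (hard_kernel m \<epsilon> \<theta>) (hard_kernel m \<epsilon> \<theta>') (snd (h ! k)))\<bar>)"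
    unfolding log_lik_ratio_def by (rule sum_abs)
  also have "\<dots> \<le> (\<Sum>k<K. 2)"
    unfolding step_ratio_def by (intro sum_mono abs_ln_kernel_ratio_hard[OF assms])
  finally show ?thesis by simp
qed

lemma log_lik_ratio_hard_eq:
  assumes "0 \<le> \<epsilon>" "\<epsilon> \<le> 1/4" "length h = K"
  shows "log_lik_ratio K (hard_kernel m \<epsilon> \<theta>) (hard_kernel m \<epsilon> \<theta>') h =
    ln (lik_ratio (hard_kernel m \<epsilon> \<theta>) (hard_kernel m \<epsilon> \<theta>') h)"
proof -
  have "kernel_ratio (hard_kernel m \<epsilon> \<theta>) (hard_kernel m \<epsilon> \<theta>') s0 a0 s1 \<noteq> 0" for s0 a0 s1
    using kernel_ratio_hard_pos[OF assms(1,2)] by (metis less_irrefl)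
  then show ?thesis
    unfolding log_lik_ratio_def lik_ratio_prod step_ratio_def assms(3) by (subst ln_prod) auto
qed

lemma integral_log_lik_ratio_hard:
  fixes \<theta>0 :: "nat \<Rightarrow> nat" and K :: nat
  assumes Alg: "valid_alg S A Alg" and S: "m + 2 \<le> S" and m: "1 \<le> m" and A: "0 < A"
    and e: "0 \<le> \<epsilon>" "\<epsilon> \<le> 1/4" and s: "2 \<le> s" "s < m + 2" and a: "a < A"
  shows "(\<integral>\<omega>. log_lik_ratio K (hard_kernel m \<epsilon> (\<theta>0(s := A))) (hard_kernel m \<epsilon> (\<theta>0(s := a)))
        (run S A (hard_kernel m \<epsilon> (\<theta>0(s := A))) (hard_init m) hard_loss Alg K \<omega>) \<partial>seed_space) =
    kl_hard S A \<epsilon> \<theta>0 m s a / m *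
      (\<integral>\<omega>. visits K s a (run S A (hard_kernel m \<epsilon> (\<theta>0(s := A))) (hard_init m) hard_loss Alg K \<omega>) \<partial>seed_space)"
proof -
  let ?Q = "hard_kernel m \<epsilon> (\<theta>0(s := A))" and ?P = "hard_kernel m \<epsilon> (\<theta>0(s := a))"
  let ?R = "run S A ?Q (hard_init m) hard_loss Alg K"
  have step: "integrable seed_space (\<lambda>\<omega>. ln (step_ratio ?Q ?P (snd (?R \<omega> ! k))))" if "k < K" for k
    using measurable_run(2)[OF Alg that] abs_ln_kernel_ratio_hard[OF e]
    unfolding step_ratio_def
    by (intro seed.integrable_bounded[of _ 2] borel_measurable_step_ratio[where g=ln, unfolded step_ratio_def])
  have pol: "integrable seed_space (\<lambda>\<omega>. fst (?R \<omega> ! k) s a)" if "k < K" for k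
    using measurable_run(1)[OF Alg that] stoch_policy_bounds[OF stoch_policy_run[OF Alg that]] S s a
    by (intro seed.integrable_bounded[of _ 1]) auto
  have "(\<integral>\<omega>. log_lik_ratio K ?Q ?P (?R \<omega>) \<partial>seed_space) = (\<Sum>k<K. \<integral>\<omega>. ln (step_ratio ?Q ?P (snd (?R \<omega> ! k))) \<partial>seed_space)"
    unfolding log_lik_ratio_def using step by (intro Bochner_Integration.integral_sum) auto
  also have "\<dots> = (\<Sum>k<K. \<integral>\<omega>. fst (?R \<omega> ! k) s a * kl_hard S A \<epsilon> \<theta>0 m s a / m \<partial>seed_space)"
    by (intro sum.cong refl integral_log_step_ratio[OF Alg S m A e s a]) simp
  also have "\<dots> = kl_hard S A \<epsilon> \<theta>0 m s a / m * (\<integral>\<omega>. (\<Sum>k<K. fst (?R \<omega> ! k) s a) \<partial>seed_space)"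
    using pol by (simp add: Bochner_Integration.integral_sum sum_distrib_left mult_ac)
  also have "(\<lambda>\<omega>. \<Sum>k<K. fst (?R \<omega> ! k) s a) = (\<lambda>\<omega>. visits K s a (?R \<omega>))"
    using S s a by (intro ext visits_run[symmetric] Alg) auto
  finally show ?thesis .
qed

lemma (in prob_space) integral_abs_sub_one_le_entropy:
  fixes W :: "'a \<Rightarrow> real"
  assumes W: "integrable M W" "integrable M (\<lambda>x. W x * ln (W x))"
    and pos: "\<And>x. 0 < W x" and mean: "(\<integral>x. W x \<partial>M) = 1" and t: "0 < t"
  shows "(\<integral>x. \<bar>W x - 1\<bar> \<partial>M) \<le> t + (\<integral>x. W x * ln (W x) \<partial>M) / (2 * t)"
proof -
  have "(\<integral>x. \<bar>W x - 1\<bar> \<partial>M) \<le> (\<integral>x. (t / 3) * W x + (1 / (2 * t)) * (W x * ln (W x)) - (1 / (2 * t)) * W x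
      + (2 * t / 3 + 1 / (2 * t)) \<partial>M)"
  proof (rule integral_mono)
    fix x
    have "(t * ((2 * W x + 4) / 3) + (W x * ln (W x) - W x + 1) / t) / 2 =
        (t / 3) * W x + (1 / (2 * t)) * (W x * ln (W x)) - (1 / (2 * t)) * W x + (2 * t / 3 + 1 / (2 * t))"
      using t by (simp add: field_simps)
    then show "\<bar>W x - 1\<bar> \<le> (t / 3) * W x + (1 / (2 * t)) * (W x * ln (W x)) - (1 / (2 * t)) * W x + (2 * t / 3 + 1 / (2 * t))"
      using pinsker_pointwise_amgm[OF pos t, of x] by simp
  qed (use W in auto)
  also have "\<dots> = (t / 3) * (\<integral>x. W x \<partial>M) + (1 / (2 * t)) * (\<integral>x. W x * ln (W x) \<partial>M)
      - (1 / (2 * t)) * (\<integral>x. W x \<partial>M) + (2 * t / 3 + 1 / (2 * t))"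
    using W prob_space by (simp add: Bochner_Integration.integral_add Bochner_Integration.integral_diff)
  also have "\<dots> = t + (\<integral>x. W x * ln (W x) \<partial>M) / (2 * t)"
    using mean t by (simp add: field_simps)
  finally show ?thesis .
qed

lemma (in prob_space) integral_sub_integral_mult_le_entropy:
  fixes N W :: "'a \<Rightarrow> real"
  assumes N: "N \<in> borel_measurable M" "\<And>x. 0 \<le> N x" "\<And>x. N x \<le> C"
    and W: "integrable M W" "integrable M (\<lambda>x. W x * ln (W x))" "\<And>x. 0 < W x" "(\<integral>x. W x \<partial>M) = 1"
    and t: "0 < t"
  shows "(\<integral>x. N x \<partial>M) - (\<integral>x. N x * W x \<partial>M) \<le> C * (t + (\<integral>x. W x * ln (W x) \<partial>M) / (2 * t))"
proof -
  have iN: "integrable M N" using N by (intro integrable_bounded[of _ C]) auto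
  have iNW: "integrable M (\<lambda>x. N x * W x)"
  proof (rule Bochner_Integration.integrable_bound[OF integrable_mult_right[OF W(1), of C]])
    show "AE x in M. norm (N x * W x) \<le> norm (C * W x)"
      using N W(3) by (intro AE_I2) (simp add: abs_mult abs_of_pos mult_right_mono order_trans[OF N(2) N(3)])
  qed (use N W(1) in \<open>auto intro: borel_measurable_integrable\<close>)
  have "(\<integral>x. N x \<partial>M) - (\<integral>x. N x * W x \<partial>M) = (\<integral>x. N x * (1 - W x) \<partial>M)"
    using iN iNW by (simp add: right_diff_distrib)
  also have "\<dots> \<le> (\<integral>x. C * \<bar>W x - 1\<bar> \<partial>M)"
  proof (rule integral_mono)
    show "N x * (1 - W x) \<le> C * \<bar>W x - 1\<bar>" for x
      using N(2,3)[of x] by (intro order_trans[OF mult_left_mono[of "1 - W x" "\<bar>W x - 1\<bar>"]] mult_right_mono) auto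
  qed (use iN iNW W(1) in \<open>auto simp: right_diff_distrib\<close>)
  also have "\<dots> \<le> C * (t + (\<integral>x. W x * ln (W x) \<partial>M) / (2 * t))"
    using integral_abs_sub_one_le_entropy[OF W t] order_trans[OF N(2) N(3)] by (simp add: mult_left_mono)
  finally show ?thesis .
qed

text \<open>By the change of measure, the two expected visit counts differ by at most \<open>K\<close> times the
  total variation between the two laws of the run, which the Pinsker bound controls by their
  Kullback-Leibler divergence.\<close>

lemma expected_visits_le:
  assumes Alg: "valid_alg S A Alg" and S: "m + 2 \<le> S" and m: "1 \<le> m" and A: "0 < A"
    and e: "0 \<le> \<epsilon>" "\<epsilon> \<le> 1/4" and s: "2 \<le> s" "s < m + 2" and a: "a < A" and t: "0 < t"
  shows "(\<integral>\<omega>. visits K s a (run S A (hard_kernel m \<epsilon> (\<theta>0(s := a))) (hard_init m) hard_loss Alg K \<omega>) \<partial>seed_space)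
    \<le> (\<integral>\<omega>. visits K s a (run S A (hard_kernel m \<epsilon> (\<theta>0(s := A))) (hard_init m) hard_loss Alg K \<omega>) \<partial>seed_space)
      + K * t + K * kl_hard S A \<epsilon> \<theta>0 m s a *
      (\<integral>\<omega>. visits K s a (run S A (hard_kernel m \<epsilon> (\<theta>0(s := A))) (hard_init m) hard_loss Alg K \<omega>) \<partial>seed_space)
      / (2 * t * m)"
proof -
  let ?Q = "hard_kernel m \<epsilon> (\<theta>0(s := A))" and ?P = "hard_kernel m \<epsilon> (\<theta>0(s := a))"
  define RQ where "RQ = run S A ?Q (hard_init m) hard_loss Alg K"
  define RP where "RP = run S A ?P (hard_init m) hard_loss Alg K"
  define W where "W \<omega> = lik_ratio ?Q ?P (RP \<omega>)" for \<omega>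
  define N where "N \<omega> = visits K s a (RP \<omega>)" for \<omega>
  define y where "y = (\<integral>\<omega>. visits K s a (RQ \<omega>) \<partial>seed_space)"
  have S2: "2 \<le> S" using S by simp
  have cm: "(\<integral>\<omega>. G (\<omega> (0, 0)) (RQ \<omega>) \<partial>seed_space) = (\<integral>\<omega>. G (\<omega> (0, 0)) (RP \<omega>) * W \<omega> \<partial>seed_space)"
    if "hist_measurable K G" "\<And>z h. \<bar>G z h\<bar> \<le> B" for G B
    unfolding RQ_def RP_def W_def by (rule change_of_measure[OF Alg S2 e that])
  have Wm: "W \<in> borel_measurable seed_space"
    unfolding W_def RP_def by (rule hist_measurable_run[OF Alg hist_measurable_lik_ratio])
  have Wb: "0 < W \<omega>" "W \<omega> \<le> 3 ^ K" for \<omega>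
    using lik_ratio_hard_bounds[OF e, of m "\<theta>0(s := A)" "\<theta>0(s := a)" "RP \<omega>"] by (simp_all add: W_def RP_def)
  have lnW: "ln (W \<omega>) = log_lik_ratio K ?Q ?P (RP \<omega>)" for \<omega>
    unfolding W_def RP_def by (rule log_lik_ratio_hard_eq[OF e, symmetric]) simp
  have Nm: "N \<in> borel_measurable seed_space"
    unfolding N_def RP_def by (rule hist_measurable_run[OF Alg hist_measurable_visits])
  have iW: "integrable seed_space W"
    using Wb by (intro seed.integrable_bounded[OF Wm, of "3 ^ K"]) (simp add: less_imp_le)
  have iWlnW: "integrable seed_space (\<lambda>\<omega>. W \<omega> * ln (W \<omega>))"
  proof (rule seed.integrable_bounded[of _ "3 ^ K * (2 * real K)"])
    show "(\<lambda>\<omega>. W \<omega> * ln (W \<omega>)) \<in> borel_measurable seed_space" using Wm by measurable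
    show "\<bar>W \<omega> * ln (W \<omega>)\<bar> \<le> 3 ^ K * (2 * real K)" for \<omega>
      unfolding abs_mult lnW using Wb[of \<omega>] abs_log_lik_ratio_hard[OF e]
      by (intro mult_mono) auto
  qed
  have mean: "(\<integral>\<omega>. W \<omega> \<partial>seed_space) = 1"
    using cm[of "\<lambda>_ _. 1" 1] seed.prob_space by (simp add: hist_measurable_def)
  have "\<bar>visits K s a h\<bar> \<le> K" for z :: real and h using visits_bounds[of K s a h] by simp
  then have y: "y = (\<integral>\<omega>. N \<omega> * W \<omega> \<partial>seed_space)"
    unfolding y_def N_def by (rule cm[OF hist_measurable_visits])
  have "(\<integral>\<omega>. W \<omega> * ln (W \<omega>) \<partial>seed_space) = (\<integral>\<omega>. log_lik_ratio K ?Q ?P (RQ \<omega>) \<partial>seed_space)"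
    using cm[OF hist_measurable_log_lik_ratio abs_log_lik_ratio_hard[OF e]] by (simp add: lnW mult.commute)
  also have "\<dots> = kl_hard S A \<epsilon> \<theta>0 m s a / m * y"
    unfolding RQ_def y_def by (rule integral_log_lik_ratio_hard[OF Alg S m A e s a])
  finally have entropy: "(\<integral>\<omega>. W \<omega> * ln (W \<omega>) \<partial>seed_space) = kl_hard S A \<epsilon> \<theta>0 m s a / m * y" .
  have "(\<integral>\<omega>. N \<omega> \<partial>seed_space) - y \<le> K * (t + kl_hard S A \<epsilon> \<theta>0 m s a / m * y / (2 * t))"
    using seed.integral_sub_integral_mult_le_entropy[OF Nm _ _ iW iWlnW Wb(1) mean t] visits_bounds
    unfolding y entropy N_def by blast
  then show ?thesis using m t by (simp add: N_def y_def RP_def RQ_def field_simps)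
qed

lemma sum_expected_visits_le:
  assumes Alg: "valid_alg S A Alg" and S: "m + 2 \<le> S" and m: "1 \<le> m" and A: "4 \<le> A"
    and e: "0 \<le> \<epsilon>" "\<epsilon> \<le> 1/4" and s: "2 \<le> s" "s < m + 2" and \<epsilon>: "300 * \<epsilon>\<^sup>2 * K \<le> real A * real m"
  shows "(\<Sum>a<A. \<integral>\<omega>. visits K s a (run S A (hard_kernel m \<epsilon> (\<theta>0(s := a))) (hard_init m) hard_loss Alg K \<omega>) \<partial>seed_space)
    \<le> real A * real K / 2"
proof -
  let ?RQ = "run S A (hard_kernel m \<epsilon> (\<theta>0(s := A))) (hard_init m) hard_loss Alg K"
  define y where "y a = (\<integral>\<omega>. visits K s a (?RQ \<omega>) \<partial>seed_space)" for a
  define x where "x a = (\<integral>\<omega>. visits K s a (run S A (hard_kernel m \<epsilon> (\<theta>0(s := a))) (hard_init m) hard_loss Alg K \<omega>) \<partial>seed_space)" for a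
  have sS: "s < S" using s S by simp
  have y0: "0 \<le> y a" for a unfolding y_def using visits_bounds by (intro integral_nonneg_AE) auto
  have "(\<Sum>a<A. y a) = (\<integral>\<omega>. (\<Sum>a<A. visits K s a (?RQ \<omega>)) \<partial>seed_space)"
    unfolding y_def using visits_bounds
    by (intro Bochner_Integration.integral_sum[symmetric] seed.integrable_bounded[of _ K]
        hist_measurable_run[OF Alg hist_measurable_visits]) auto
  also have "\<dots> = (\<integral>\<omega>. (\<Sum>k<K. \<Sum>a<A. fst (?RQ \<omega> ! k) s a) \<partial>seed_space)"
    using sS by (simp add: visits_run[OF Alg] sum.swap[of _ "{..<A}"])
  also have "\<dots> = K"
    using stoch_policy_run[OF Alg] sS seed.prob_space by (simp add: stoch_policy_def is_distr_def)
  finally have ysum: "(\<Sum>a<A. y a) = K" .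
  define c where "c = 30 * K * \<epsilon>\<^sup>2 / m"
  have "x a \<le> y a + K / 10 + c * y a" if a: "a < A" for a
  proof -
    have "x a \<le> y a + K * (1/10) + K * kl_hard S A \<epsilon> \<theta>0 m s a * y a / (2 * (1/10) * m)"
      unfolding x_def y_def using A by (intro expected_visits_le[OF Alg S m _ e s a]) auto
    also have "K * kl_hard S A \<epsilon> \<theta>0 m s a * y a / (2 * (1/10) * m) \<le> K * (6 * \<epsilon>\<^sup>2) * y a / (2 * (1/10) * m)"
      using kl_hard_le[OF e s a] S y0[of a] m by (intro divide_right_mono mult_right_mono mult_left_mono) auto
    finally show ?thesis by (simp add: c_def field_simps)
  qed
  then have "(\<Sum>a<A. x a) \<le> (\<Sum>a<A. y a + K / 10 + c * y a)"
    by (intro sum_mono) simp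
  also have "\<dots> = real K + real A * real K / 10 + c * real K"
    by (simp add: sum.distrib ysum sum_distrib_left[symmetric])
  also have "c * real K \<le> real A * real K / 10"
  proof -
    have "real K * (300 * \<epsilon>\<^sup>2 * K) \<le> real K * (real A * real m)" using \<epsilon> by (intro mult_left_mono) auto
    then show ?thesis using m unfolding c_def by (simp add: field_simps)
  qed
  also have "real K + real A * real K / 10 + real A * real K / 10 \<le> real A * real K / 2"
  proof -
    have "real K * 1 \<le> real K * (3 * real A / 10)" using A by (intro mult_left_mono) auto
    then show ?thesis by (simp add: field_simps)
  qed
  finally show ?thesis unfolding x_def by simp
qed

section \<open>Regret on the hard instances\<close>

lemma optimal_value_hard_le:
  assumes S: "m + 2 \<le> S" and m: "1 \<le> m" and A: "0 < A" and e: "0 \<le> \<epsilon>"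
    and \<gamma>: "0 \<le> \<gamma>" "\<gamma> < 1" and \<theta>: "\<forall>s\<in>{2..<m+2}. \<theta> s < A"
  shows "(INF pol \<in> {pol. stoch_policy S A pol}. value_fn S A (hard_kernel m \<epsilon> \<theta>) (hard_init m) hard_loss \<gamma> pol)
    \<le> \<gamma> / (1 - \<gamma>) * (1/2 - \<epsilon>)"
proof -
  let ?V = "value_fn S A (hard_kernel m \<epsilon> \<theta>) (hard_init m) hard_loss \<gamma>"
  define best where "best s a = (if 2 \<le> s \<and> s < m + 2 then (if a = \<theta> s then 1 else 0) else (if a = 0 then 1 else 0::real))"
    for s a :: nat
  have "is_distr A (best s)" for s
  proof (cases "2 \<le> s \<and> s < m + 2")
    case True
    then have "best s = (\<lambda>a. if a = \<theta> s then 1 else 0)" using True by (intro ext) (simp add: best_def)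
    then show ?thesis using \<theta> True by (simp add: is_distr_def sum.delta')
  next
    case False
    then have "best s = (\<lambda>a. if a = 0 then 1 else 0)" by (intro ext) (simp only: best_def if_not_P[OF False] if_False)
    then show ?thesis using A by (simp add: is_distr_def sum.delta')
  qed
  then have best: "stoch_policy S A best" by (simp add: stoch_policy_def)
  have "hard_gain m A \<theta> best = m" unfolding hard_gain_eq[OF \<theta>] by (simp add: best_def)
  then have "?V best = \<gamma> / (1 - \<gamma>) * (1/2 - \<epsilon>)" using value_fn_hard[OF S best m \<gamma>] m by simp
  moreover have "bdd_below (?V ` {pol. stoch_policy S A pol})"
  proof (rule bdd_belowI)
    fix v assume "v \<in> ?V ` {pol. stoch_policy S A pol}"
    then obtain \<pi> where \<pi>: "stoch_policy S A \<pi>" and v: "v = ?V \<pi>" by auto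
    have "\<epsilon> / m * hard_gain m A \<theta> \<pi> \<le> \<epsilon> / m * m"
      using hard_gain_le[OF S \<pi>] e by (intro mult_left_mono) auto
    then have "1/2 - \<epsilon> \<le> 1/2 - \<epsilon> / m * hard_gain m A \<theta> \<pi>" using m by simp
    then show "\<gamma> / (1 - \<gamma>) * (1/2 - \<epsilon>) \<le> v"
      unfolding v value_fn_hard[OF S \<pi> m \<gamma>] using \<gamma> by (intro mult_left_mono) auto
  qed
  ultimately show ?thesis using best by (metis (mono_tags) cINF_lower mem_Collect_eq)
qed

text \<open>Every episode that misses the good action at its initial state costs \<open>\<epsilon> \<gamma> / (1 - \<gamma>)\<close>
  in expectation.\<close>

lemma regret_hard_ge:
  assumes Alg: "valid_alg S A Alg" and S: "m + 2 \<le> S" and m: "1 \<le> m" and A: "0 < A"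
    and e: "0 \<le> \<epsilon>" and \<gamma>: "0 \<le> \<gamma>" "\<gamma> < 1" and \<theta>: "\<forall>s\<in>{2..<m+2}. \<theta> s < A"
  shows "\<gamma> / (1 - \<gamma>) * (\<epsilon> / m) *
      (\<Sum>s\<in>{2..<m+2}. K - (\<integral>\<omega>. visits K s (\<theta> s) (run S A (hard_kernel m \<epsilon> \<theta>) (hard_init m) hard_loss Alg K \<omega>) \<partial>seed_space))
    \<le> regret S A (hard_kernel m \<epsilon> \<theta>) (hard_init m) hard_loss \<gamma> Alg K"
proof -
  let ?C = "{2..<m+2}" and ?R = "run S A (hard_kernel m \<epsilon> \<theta>) (hard_init m) hard_loss Alg K"
  let ?V = "value_fn S A (hard_kernel m \<epsilon> \<theta>) (hard_init m) hard_loss \<gamma>"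
  define c where "c = \<gamma> / (1 - \<gamma>)"
  define V' where "V' = (INF pol \<in> {pol. stoch_policy S A pol}. ?V pol)"
  have V'_le: "V' \<le> c * (1/2 - \<epsilon>)"
    unfolding V'_def c_def by (rule optimal_value_hard_le[OF S m A e \<gamma> \<theta>])
  have V: "?V \<pi> = c * (1/2 - \<epsilon> / m * hard_gain m A \<theta> \<pi>)" if "stoch_policy S A \<pi>" for \<pi>
    unfolding c_def by (rule value_fn_hard[OF S that m \<gamma>])
  have visits: "integrable seed_space (\<lambda>\<omega>. visits K s (\<theta> s) (?R \<omega>))" for s
    using visits_bounds by (intro seed.integrable_bounded[of _ K] hist_measurable_run[OF Alg hist_measurable_visits]) auto
  have "(\<Sum>k<K. ?V (fst (?R \<omega> ! k)) - V') =
      K * (c / 2 - V') - c * \<epsilon> / m * (\<Sum>s\<in>?C. visits K s (\<theta> s) (?R \<omega>))" for \<omega>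
  proof -
    have "(\<Sum>k<K. ?V (fst (?R \<omega> ! k)) - V') = (\<Sum>k<K. (c / 2 - V') - c * \<epsilon> / m * (\<Sum>s\<in>?C. fst (?R \<omega> ! k) s (\<theta> s)))"
      by (intro sum.cong refl) (simp add: V[OF stoch_policy_run[OF Alg]] hard_gain_eq[OF \<theta>] algebra_simps)
    also have "\<dots> = K * (c / 2 - V') - (\<Sum>k<K. c * \<epsilon> / m * (\<Sum>s\<in>?C. fst (?R \<omega> ! k) s (\<theta> s)))"
      by (simp add: sum_subtractf)
    also have "(\<Sum>k<K. c * \<epsilon> / m * (\<Sum>s\<in>?C. fst (?R \<omega> ! k) s (\<theta> s))) =
        c * \<epsilon> / m * (\<Sum>s\<in>?C. \<Sum>k<K. fst (?R \<omega> ! k) s (\<theta> s))"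
      by (simp only: sum_distrib_left[symmetric] sum.swap[of _ "{..<K}"])
    also have "(\<Sum>s\<in>?C. \<Sum>k<K. fst (?R \<omega> ! k) s (\<theta> s)) = (\<Sum>s\<in>?C. visits K s (\<theta> s) (?R \<omega>))"
      using S \<theta> by (intro sum.cong refl visits_run[OF Alg, symmetric]) auto
    finally show ?thesis .
  qed
  then have "regret S A (hard_kernel m \<epsilon> \<theta>) (hard_init m) hard_loss \<gamma> Alg K =
      K * (c / 2 - V') - c * \<epsilon> / m * (\<Sum>s\<in>?C. \<integral>\<omega>. visits K s (\<theta> s) (?R \<omega>) \<partial>seed_space)"
    unfolding regret_def Let_def V'_def[symmetric] using visits seed.prob_space
    by (simp add: Bochner_Integration.integral_sum)
  also have "\<dots> \<ge> K * (c / 2 - c * (1/2 - \<epsilon>)) - c * \<epsilon> / m * (\<Sum>s\<in>?C. \<integral>\<omega>. visits K s (\<theta> s) (?R \<omega>) \<partial>seed_space)"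
    using V'_le by (simp add: mult_left_mono)
  moreover have "K * (c / 2 - c * (1/2 - \<epsilon>)) - c * \<epsilon> / m * (\<Sum>s\<in>?C. \<integral>\<omega>. visits K s (\<theta> s) (?R \<omega>) \<partial>seed_space) =
      c * (\<epsilon> / m) * (\<Sum>s\<in>?C. K - (\<integral>\<omega>. visits K s (\<theta> s) (?R \<omega>) \<partial>seed_space))"
    using m by (simp add: sum_subtractf field_simps)
  ultimately show ?thesis unfolding c_def by simp
qed

lemma exists_PiE_sum_le_average:
  fixes f :: "('a \<Rightarrow> nat) \<Rightarrow> 'a \<Rightarrow> real" and B :: real
  assumes C: "finite C" and A: "0 < A"
    and avg: "\<And>s g. s \<in> C \<Longrightarrow> (\<Sum>y<A. f (g(s := y)) s) \<le> A * B"
  shows "\<exists>\<theta>\<in>Pi\<^sub>E C (\<lambda>_. {..<A}). (\<Sum>s\<in>C. f \<theta> s) \<le> card C * B"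
proof (rule ccontr)
  let ?T = "Pi\<^sub>E C (\<lambda>_. {..<A})"
  assume "\<not> ?thesis"
  then have gt: "card C * B < (\<Sum>s\<in>C. f \<theta> s)" if "\<theta> \<in> ?T" for \<theta> using that by (simp add: not_le)
  have "finite ?T" using C by (simp add: finite_PiE)
  moreover have "?T \<noteq> {}" using A by (auto simp: PiE_eq_empty_iff)
  ultimately have "card ?T * (card C * B) < (\<Sum>\<theta>\<in>?T. \<Sum>s\<in>C. f \<theta> s)"
    using sum_strict_mono[of ?T "\<lambda>_. card C * B", OF _ _ gt] by simp
  also have "\<dots> = (\<Sum>s\<in>C. \<Sum>\<theta>\<in>?T. f \<theta> s)" by (rule sum.swap)
  also have "\<dots> \<le> (\<Sum>s\<in>C. card ?T * B)"
  proof (rule sum_mono)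
    fix s assume s: "s \<in> C"
    let ?T' = "Pi\<^sub>E (C - {s}) (\<lambda>_. {..<A})"
    have T: "?T = (\<lambda>(y, g). g(s := y)) ` ({..<A} \<times> ?T')"
      using PiE_insert_eq[of s "C - {s}" "\<lambda>_. {..<A}"] s by (simp add: insert_absorb)
    have inj: "inj_on (\<lambda>(y, g). g(s := y)) ({..<A} \<times> ?T')"
      using inj_combinator[of s "C - {s}" "\<lambda>_. {..<A}"] by simp
    have "(\<Sum>\<theta>\<in>?T. f \<theta> s) = (\<Sum>y<A. \<Sum>g\<in>?T'. f (g(s := y)) s)"
      unfolding T sum.reindex[OF inj] by (simp add: sum.cartesian_product case_prod_unfold)
    also have "\<dots> = (\<Sum>g\<in>?T'. \<Sum>y<A. f (g(s := y)) s)"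
      by (rule sum.swap)
    also have "\<dots> \<le> (\<Sum>g\<in>?T'. A * B)" by (intro sum_mono avg[OF s])
    also have "\<dots> = card ?T * B"
      unfolding T card_image[OF inj] by (simp add: card_cartesian_product)
    finally show "(\<Sum>\<theta>\<in>?T. f \<theta> s) \<le> card ?T * B" .
  qed
  also have "\<dots> = card ?T * (card C * B)" by simp
  finally show False by simp
qed

lemma exists_hard_instance:
  assumes Alg: "valid_alg S A Alg" and S: "m + 2 \<le> S" and m: "1 \<le> m" and A: "4 \<le> A"
    and e: "0 \<le> \<epsilon>" "\<epsilon> \<le> 1/4" and \<epsilon>: "300 * \<epsilon>\<^sup>2 * K \<le> real A * real m" and \<gamma>: "0 \<le> \<gamma>" "\<gamma> < 1"
  shows "\<exists>\<theta>. \<gamma> / (1 - \<gamma>) * (\<epsilon> * K / 2) \<le> regret S A (hard_kernel m \<epsilon> \<theta>) (hard_init m) hard_loss \<gamma> Alg K"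
proof -
  let ?C = "{2..<m+2}"
  define f where "f \<theta> s = (\<integral>\<omega>. visits K s (\<theta> s) (run S A (hard_kernel m \<epsilon> \<theta>) (hard_init m) hard_loss Alg K \<omega>) \<partial>seed_space)"
    for \<theta> s
  have "\<exists>\<theta>\<in>Pi\<^sub>E ?C (\<lambda>_. {..<A}). (\<Sum>s\<in>?C. f \<theta> s) \<le> card ?C * (K / 2)"
  proof (rule exists_PiE_sum_le_average)
    fix s g assume "s \<in> ?C"
    then show "(\<Sum>y<A. f (g(s := y)) s) \<le> A * (K / 2)"
      using sum_expected_visits_le[OF Alg S m A e _ _ \<epsilon>, of s g] by (simp add: f_def)
  qed (use A in auto)
  then obtain \<theta> where \<theta>: "\<forall>s\<in>?C. \<theta> s < A" and few: "(\<Sum>s\<in>?C. f \<theta> s) \<le> m * (K / 2)"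
    by (auto simp: PiE_iff)
  have "\<epsilon> * K / 2 = \<epsilon> / m * (m * K - m * (K / 2))" using m by (simp add: field_simps)
  also have "\<dots> \<le> \<epsilon> / m * (\<Sum>s\<in>?C. K - f \<theta> s)"
    using few e by (intro mult_left_mono) (auto simp: sum_subtractf algebra_simps)
  finally have "\<gamma> / (1 - \<gamma>) * (\<epsilon> * K / 2) \<le> \<gamma> / (1 - \<gamma>) * (\<epsilon> / m * (\<Sum>s\<in>?C. K - f \<theta> s))"
    by (rule mult_left_mono) (use \<gamma> in simp)
  also have "\<dots> = \<gamma> / (1 - \<gamma>) * (\<epsilon> / m) * (\<Sum>s\<in>?C. K - f \<theta> s)"
    by (simp only: mult.assoc)
  also have "\<dots> \<le> regret S A (hard_kernel m \<epsilon> \<theta>) (hard_init m) hard_loss \<gamma> Alg K"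
    unfolding f_def using A by (intro regret_hard_ge[OF Alg S m _ e(1) \<gamma> \<theta>]) auto
  finally show ?thesis by blast
qed

text \<open>The parameters of the construction: \<open>m = d - 1\<close> initial states and the largest bias \<open>\<epsilon>\<close>
  the learner cannot detect within \<open>K\<close> episodes.\<close>

lemma hard_epsilon_bounds:
  fixes d A K :: nat
  assumes d: "8 \<le> d" and A: "int A \<ge> int d - 3" and K: "real K \<ge> 2 * (real d - 4) * real A"
    and \<epsilon>: "\<epsilon> = sqrt (real A * real (d - 1) / (300 * real K))"
  shows "4 \<le> A" and "\<epsilon> \<le> 1/4" and "300 * \<epsilon>\<^sup>2 * K \<le> real A * real (d - 1)"
    and "sqrt (real d * real A * real K) \<le> 20 * (\<epsilon> * K)"
proof -
  show A4: "4 \<le> A" using A d by linarith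
  have m: "real (d - 1) = real d - 1" using d by simp
  have "2 * 4 * 4 \<le> 2 * (real d - 4) * real A" using d A4 by (intro mult_mono) auto
  then have K_pos: "0 < real K" using K by simp
  have \<epsilon>2: "\<epsilon>\<^sup>2 = real A * real (d - 1) / (300 * real K)" unfolding \<epsilon> using K_pos by simp
  then show "300 * \<epsilon>\<^sup>2 * K \<le> real A * real (d - 1)" using K_pos by simp
  have "real A * real (d - 1) \<le> real A * (2 * (real d - 4))" using m d by (intro mult_left_mono) auto
  also have "\<dots> \<le> K" using K by (simp add: mult_ac)
  finally have "\<epsilon>\<^sup>2 \<le> (1/4)\<^sup>2" unfolding \<epsilon>2 using K_pos by (simp add: field_simps)
  then show "\<epsilon> \<le> 1/4" by (rule power2_le_imp_le) simp
  show "sqrt (real d * real A * real K) \<le> 20 * (\<epsilon> * K)"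
  proof (rule real_le_lsqrt)
    have "real d * real A * real K \<le> (4/3) * real (d - 1) * real A * real K"
      using m d by (intro mult_right_mono) auto
    also have "\<dots> = 400 * (real A * real (d - 1) / (300 * real K)) * (real K)\<^sup>2"
      using K_pos by (simp add: field_simps power2_eq_square)
    also have "\<dots> = (20 * (\<epsilon> * K))\<^sup>2"
      unfolding \<epsilon>2[symmetric] by (simp add: power_mult_distrib)
    finally show "real d * real A * real K \<le> (20 * (\<epsilon> * K))\<^sup>2" .
  qed (use \<epsilon> in simp_all)
qed

theorem theorem2:
  "\<exists>c>0. \<forall>(d::nat) (S::nat) (A::nat) (K::nat) (\<gamma>::real) (Alg::algorithm).
     8 \<le> d \<longrightarrow> d + 1 \<le> S \<longrightarrow> int A \<ge> int d - 3 \<longrightarrow>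
     real K \<ge> 2 * (real d - 4) * real A \<longrightarrow>
     0 \<le> \<gamma> \<longrightarrow> \<gamma> < 1 \<longrightarrow> valid_alg S A Alg \<longrightarrow>
     (\<exists>P d0 l. valid_mdp S A P d0 l \<and> low_rank d S A P \<and>
        regret S A P d0 l \<gamma> Alg K \<ge> c * (\<gamma>\<^sup>2 / (1 - \<gamma>)) * sqrt (real d * real A * real K))"
proof (intro exI[of _ "1/40"] conjI allI impI)
  fix d S A K :: nat and \<gamma> :: real and Alg :: algorithm
  assume d: "8 \<le> d" and S: "d + 1 \<le> S" and A: "int A \<ge> int d - 3"
    and K: "real K \<ge> 2 * (real d - 4) * real A" and \<gamma>: "0 \<le> \<gamma>" "\<gamma> < 1" and Alg: "valid_alg S A Alg"
  define \<epsilon> where "\<epsilon> = sqrt (real A * real (d - 1) / (300 * real K))"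
  note par = hard_epsilon_bounds[OF d A K \<epsilon>_def]
  have m: "d - 1 + 2 \<le> S" "1 \<le> d - 1" using d S by auto
  have e: "0 \<le> \<epsilon>" "\<epsilon> \<le> 1/2" using par(2) by (auto simp: \<epsilon>_def)
  define c where "c = \<gamma> / (1 - \<gamma>)"
  obtain \<theta> where regret: "c * (\<epsilon> * K / 2) \<le> regret S A (hard_kernel (d - 1) \<epsilon> \<theta>) (hard_init (d - 1)) hard_loss \<gamma> Alg K"
    using exists_hard_instance[OF Alg m par(1) e(1) par(2,3) \<gamma>] unfolding c_def by blast
  have "\<gamma>\<^sup>2 / (1 - \<gamma>) \<le> c"
    unfolding c_def using \<gamma> by (intro divide_right_mono) (auto simp: power2_eq_square intro: mult_left_le_one_le)
  then have "1/40 * (\<gamma>\<^sup>2 / (1 - \<gamma>)) * sqrt (real d * real A * real K) \<le> 1/40 * c * (20 * (\<epsilon> * K))"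
    using par(4) \<gamma> by (intro mult_mono mult_left_mono) (auto simp: c_def)
  also have "\<dots> = c * (\<epsilon> * K / 2)" by simp
  also note regret
  finally have bound: "1/40 * (\<gamma>\<^sup>2 / (1 - \<gamma>)) * sqrt (real d * real A * real K) \<le>
      regret S A (hard_kernel (d - 1) \<epsilon> \<theta>) (hard_init (d - 1)) hard_loss \<gamma> Alg K" .
  have "valid_mdp S A (hard_kernel (d - 1) \<epsilon> \<theta>) (hard_init (d - 1)) hard_loss"
    by (rule valid_mdp_hard[OF m e])
  moreover have "low_rank d S A (hard_kernel (d - 1) \<epsilon> \<theta>)"
    using d e by (intro low_rank_hard_kernel) auto
  ultimately show "\<exists>P d0 l. valid_mdp S A P d0 l \<and> low_rank d S A P \<and>
      1/40 * (\<gamma>\<^sup>2 / (1 - \<gamma>)) * sqrt (real d * real A * real K) \<le> regret S A P d0 l \<gamma> Alg K"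
    using bound by blast
qed simp

end
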